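(* Let $(\sigma_k)_{k\ge1}$ be a random arrangement of $\mathbb{N}$ such that for every $k$ and $\alpha\in\mathfrak{S}_k$, $\mathbb{P}(\sigma_k=\alpha)$ depends only on $Q(\alpha)$. Then the random path $(\rho(\sigma_k))_{k\ge1}$ on $\mathcal{Y}$ is harmonic, i.e. for every partition $\tau$ of $n$ and standard tableaux $P_1,P_2$ of shape $\tau$, $\mathbb{P}((\rho(\sigma_1),\dots,\rho(\sigma_n))=P_1)=\mathbb{P}((\rho(\sigma_1),\dots,\rho(\sigma_n))=P_2)$. In particular this holds for every random arrangement such that $\mathbb{P}(\sigma_k=\alpha)$ depends only on $des(\alpha)$ (i.e. every random arrangement coming from a harmonic measure on $\mathcal{Z}$).
   Context: Permutations are written as words; $des(\alpha)=\{i:\alpha(i+1)<\alpha(i)\}$. For $\sigma\in\mathfrak{S}_k$, $\sigma_\downarrow\in\mathfrak{S}_{k-1}$ erases the letter $k$. An arrangement of $\mathbb{N}$ is a sequence $(\sigma_k)_{k\ge1}$ with $\sigma_k\in\mathfrak{S}_k$, $(\sigma_k)_\downarrow=\sigma_{k-1}$. $P(\sigma),Q(\sigma)$ are the Robinson–Schensted insertion and recording tableaux, $\rho(\sigma)$ their common shape. The Young graph $\mathcal{Y}$ has partitions as vertices, $\rho\nearrow\tau$ iff $\tau$ is $\rho$ plus one cell; a path from $\emptyset$ of length $n$ is identified with the standard tableau whose cell added at step $i$ contains $i$. For an arrangement, $(\rho(\sigma_k))_k$ is a path in $\mathcal{Y}$. *)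

theory Defs
  imports "HOL-Probability.Probability" "HOL-Combinatorics.Multiset_Permutations"
begin

text \<open>Permutations in S_k are words: lists in permutations_of_set {1..k}.\<close>

definition des :: "nat list \<Rightarrow> nat set" where
  "des \<alpha> = {i. 1 \<le> i \<and> i < length \<alpha> \<and> \<alpha> ! i < \<alpha> ! (i - 1)}"
  (* 1-indexed: i is a descent iff alpha(i+1) < alpha(i); alpha(j) = alpha ! (j - 1) *)

definition erase_max :: "nat \<Rightarrow> nat list \<Rightarrow> nat list" where
  "erase_max k \<alpha> = filter (\<lambda>x. x \<noteq> k) \<alpha>"

definition arrangement :: "(nat \<Rightarrow> nat list) \<Rightarrow> bool" where
  "arrangement s \<longleftrightarrow>
     (\<forall>k\<ge>1. s k \<in> permutations_of_set {1..k}) \<and>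
     (\<forall>k\<ge>2. erase_max k (s k) = s (k - 1))"

text \<open>Tableaux are lists of rows (English convention); row insertion (Schensted bumping).\<close>

fun row_insert :: "nat \<Rightarrow> nat list \<Rightarrow> nat list \<times> nat option" where
  "row_insert x [] = ([x], None)"
| "row_insert x (y # ys) =
     (if x < y then (x # ys, Some y)
      else (case row_insert x ys of (r, b) \<Rightarrow> (y # r, b)))"

text \<open>Insert x into tableau; returns new tableau and the (0-based) row of the new cell.\<close>
fun rs_insert :: "nat \<Rightarrow> nat list list \<Rightarrow> nat list list \<times> nat" where
  "rs_insert x [] = ([[x]], 0)"
| "rs_insert x (r # rs) =
     (case row_insert x r of
        (r', None) \<Rightarrow> (r' # rs, 0)
      | (r', Some y) \<Rightarrow> (case rs_insert y rs of (rs', i) \<Rightarrow> (r' # rs', Suc i)))"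

definition add_to_row :: "nat \<Rightarrow> nat \<Rightarrow> nat list list \<Rightarrow> nat list list" where
  "add_to_row j i T = (if i < length T then T[i := T ! i @ [j]] else T @ [[j]])"

definition RS :: "nat list \<Rightarrow> nat list list \<times> nat list list" where
  "RS w = (case fold (\<lambda>x (P, Q, j).
                 (case rs_insert x P of (P', i) \<Rightarrow> (P', add_to_row (Suc j) i Q, Suc j)))
              w ([], [], 0) of (P, Q, _) \<Rightarrow> (P, Q))"

definition RS_P :: "nat list \<Rightarrow> nat list list" where "RS_P w = fst (RS w)"
definition RS_Q :: "nat list \<Rightarrow> nat list list" where "RS_Q w = snd (RS w)"

definition rho :: "nat list \<Rightarrow> nat list" where
  "rho w = map length (RS_P w)"

definition is_partition_of :: "nat \<Rightarrow> nat list \<Rightarrow> bool" where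
  "is_partition_of n \<tau> \<longleftrightarrow> sorted_wrt (\<ge>) \<tau> \<and> (\<forall>l\<in>set \<tau>. 0 < l) \<and> sum_list \<tau> = n"

definition standard_tableau :: "nat list \<Rightarrow> nat list list \<Rightarrow> bool" where
  "standard_tableau \<tau> T \<longleftrightarrow>
     map length T = \<tau> \<and>
     concat T \<in> permutations_of_set {1..sum_list \<tau>} \<and>
     (\<forall>r\<in>set T. sorted_wrt (<) r) \<and>
     (\<forall>i j. Suc i < length T \<and> j < length (T ! Suc i) \<longrightarrow> T ! i ! j < T ! Suc i ! j)"

text \<open>Path in the Young graph associated to a standard tableau: its i-th vertex is the
  shape formed by the entries \<le> i.\<close>
definition tableau_vertex :: "nat list list \<Rightarrow> nat \<Rightarrow> nat list" where
  "tableau_vertex T i = filter (\<lambda>l. 0 < l) (map (\<lambda>r. length (filter (\<lambda>x. x \<le> i) r)) T)"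

end

theory Submission
  imports Defs "HOL-Library.More_List"
begin

text \<open>
  By Schensted's restriction property, the insertion tableau of the word obtained by erasing all
  letters larger than \<open>k\<close> is the restriction of the insertion tableau to the entries \<open>\<le> k\<close>. In an
  arrangement \<open>\<sigma>\<^sub>k\<close> is such a restriction of \<open>\<sigma>\<^sub>n\<close>, so the path \<open>(\<rho>(\<sigma>\<^sub>1), \<dots>, \<rho>(\<sigma>\<^sub>n))\<close> equals the
  standard tableau \<open>P(\<sigma>\<^sub>n)\<close>, and the event that the path is \<open>P\<close> is the event \<open>\<sigma>\<^sub>n \<in> P\<^sup>-\<^sup>1(P)\<close>.
  The Robinson--Schensted bijection matches the fibres of \<open>P\<close> over two tableaux of the same shape
  by keeping \<open>Q\<close> fixed; since \<open>\<P>(\<sigma>\<^sub>n = \<alpha>)\<close> depends only on \<open>Q(\<alpha>)\<close>, both fibres have the same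
  probability. The descent set of \<open>\<alpha>\<close> is a function of \<open>Q(\<alpha>)\<close> (row bumping lemma), which gives the
  second case.
\<close>

lemma row_insert_NoneD:
  "row_insert x r = (r', None) \<Longrightarrow> r' = r @ [x] \<and> (\<forall>z\<in>set r. \<not> x < z)"
  by (induction x r arbitrary: r' rule: row_insert.induct) (auto split: if_splits prod.splits)

lemma row_insert_SomeD:
  "row_insert x r = (r', Some z) \<Longrightarrow>
     \<exists>j<length r. r!j = z \<and> x < z \<and> r' = r[j:=x] \<and> (\<forall>q<j. \<not> x < r!q)"
proof (induction x r arbitrary: r' rule: row_insert.induct)
  case (1 x) then show ?case by simp
next
  case (2 x y ys)
  show ?case
  proof (cases "x < y")
    case True then show ?thesis using 2(2) by (intro exI[of _ 0]) auto
  next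
    case False
    obtain r b where rb: "row_insert x ys = (r, b)" by fastforce
    with 2(2) False have "b = Some z" "r' = y # r" by auto
    from 2(1)[OF False rb[unfolded \<open>b = Some z\<close>]] obtain j where
      "j<length ys" "ys!j = z" "x < z" "r = ys[j:=x]" "\<forall>q<j. \<not> x < ys!q" by blast
    then show ?thesis using \<open>r' = y # r\<close> False
      by (intro exI[of _ "Suc j"]) (auto simp: nth_Cons split: nat.splits)
  qed
qed

lemma row_insert_append:
  "\<forall>z\<in>set a. \<not> x < z \<Longrightarrow> row_insert x (a @ b) = (case row_insert x b of (r, c) \<Rightarrow> (a @ r, c))"
  by (induction a) (auto split: prod.splits)

lemma row_insert_append_Some:
  "row_insert x a = (a', Some y) \<Longrightarrow> row_insert x (a @ b) = (a' @ b, Some y)"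
  by (induction x a arbitrary: a' rule: row_insert.induct) (auto split: if_splits prod.splits)

lemma set_row_insert: "set (fst (row_insert x r)) \<subseteq> insert x (set r)"
  by (induction x r rule: row_insert.induct) (auto split: prod.splits)

lemma mem_row_insert: "x \<in> set (fst (row_insert x r))"
  by (induction x r rule: row_insert.induct) (auto split: prod.splits)

lemma sorted_row_insert:
  "sorted_wrt (<) r \<Longrightarrow> x \<notin> set r \<Longrightarrow> sorted_wrt (<) (fst (row_insert x r))"
proof (induction x r rule: row_insert.induct)
  case (1 x) then show ?case by simp
next
  case (2 x y ys)
  show ?case
  proof (cases "x < y")
    case True then show ?thesis using 2 by auto
  next
    case False
    then have "y < x" using 2(3) by auto
    obtain r b where rb: "row_insert x ys = (r, b)" by fastforce
    have "sorted_wrt (<) r" using 2 False rb by auto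
    moreover have "set r \<subseteq> insert x (set ys)" using set_row_insert[of x ys] rb by auto
    ultimately show ?thesis using False rb \<open>y < x\<close> 2(2) by auto
  qed
qed

lemma mset_row_insert:
  "row_insert x r = (r', b) \<Longrightarrow>
     mset r' + (case b of None \<Rightarrow> {#} | Some y \<Rightarrow> {#y#}) = add_mset x (mset r)"
  by (induction x r arbitrary: r' b rule: row_insert.induct) (auto split: if_splits prod.splits)

lemma length_row_insert_Some: "row_insert x r = (r', Some y) \<Longrightarrow> length r' = length r"
  by (induction x r arbitrary: r' rule: row_insert.induct) (auto split: if_splits prod.splits)

text \<open>Row \<open>s\<close> may sit directly below row \<open>r\<close> in a tableau. Tableaux are lists of nonempty,
  strictly increasing rows with distinct entries; they need not be standard.\<close>

definition dominates :: "nat list \<Rightarrow> nat list \<Rightarrow> bool" where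
  "dominates r s \<longleftrightarrow> length s \<le> length r \<and> (\<forall>q<length s. r!q < s!q)"

definition tableau :: "nat list list \<Rightarrow> bool" where
  "tableau T \<longleftrightarrow> (\<forall>r\<in>set T. r \<noteq> [] \<and> sorted_wrt (<) r) \<and> (\<forall>i. Suc i < length T \<longrightarrow> dominates (T!i) (T!Suc i))"

lemma tableau_Nil[simp]: "tableau []" by (simp add: tableau_def)

lemma tableau_Cons: "tableau (r # rs) \<longleftrightarrow> r \<noteq> [] \<and> sorted_wrt (<) r \<and> tableau rs \<and> (rs \<noteq> [] \<longrightarrow> dominates r (hd rs))"
  by (auto simp: tableau_def nth_Cons hd_conv_nth split: nat.splits)

lemma tableau_shape_pos: "tableau T \<Longrightarrow> 0 \<notin> set (map length T)"
  by (auto simp: tableau_def)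

lemma tableau_shape_decreasing: "tableau T \<Longrightarrow> Suc i < length T \<Longrightarrow> length (T!Suc i) \<le> length (T!i)"
  by (auto simp: tableau_def dominates_def)

lemma tableau_empty: "tableau T \<Longrightarrow> set (concat T) = {} \<Longrightarrow> T = []"
  by (cases T) (auto simp: tableau_def)

lemma tableau_drop: "tableau T \<Longrightarrow> tableau (drop a T)"
  by (auto simp: tableau_def dest: in_set_dropD)

lemma tableau_hd_less: "tableau (r # rs) \<Longrightarrow> \<forall>s\<in>set rs. \<forall>z\<in>set s. hd r < z"
proof (induction rs arbitrary: r)
  case Nil then show ?case by simp
next
  case (Cons s rest)
  have d: "dominates r s" "tableau (s # rest)" "r \<noteq> []" "s \<noteq> []" "sorted_wrt (<) s" using Cons.prems by (auto simp: tableau_Cons)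
  have h: "hd r < hd s" using d by (auto simp: dominates_def hd_conv_nth)
  have "\<forall>z\<in>set s. hd s \<le> z" using d(4,5) by (cases s) auto
  then show ?case using Cons.IH[OF d(2)] h by fastforce
qed

lemma tableau_hd_less_nth: "tableau T \<Longrightarrow> a < b \<Longrightarrow> b < length T \<Longrightarrow> z \<in> set (T!b) \<Longrightarrow> hd (T!a) < z"
proof -
  assume a: "tableau T" "a < b" "b < length T" "z \<in> set (T!b)"
  have d: "drop a T = T!a # drop (Suc a) T" using a by (simp add: Cons_nth_drop_Suc)
  have "tableau (T!a # drop (Suc a) T)" using tableau_drop[OF a(1), of a] d by simp
  moreover have "T!b \<in> set (drop (Suc a) T)"
  proof -
    have "drop (Suc a) T ! (b - Suc a) = T!b" using a by simp
    moreover have "b - Suc a < length (drop (Suc a) T)" using a by simp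
    ultimately show ?thesis by (metis nth_mem)
  qed
  ultimately show ?thesis using tableau_hd_less a(4) by blast
qed

lemma dominates_row_insert:
  assumes sr: "sorted_wrt (<) r" and d: "dominates r s"
    and ri: "row_insert x r = (r', Some y)" and xr: "x \<notin> set r" and si: "row_insert y s = (s', b)"
  shows "dominates r' s'"
proof -
  from row_insert_SomeD[OF ri] obtain j where j: "j<length r" "r!j = y" "x < y" "r' = r[j:=x]"
    "\<forall>q<j. \<not> x < r!q" by blast
  have rq: "\<And>q. q < j \<Longrightarrow> r!q < x" using j xr sr by (metis linorder_neqE_nat nth_mem order.strict_trans)
  have rless: "\<And>q. q < j \<Longrightarrow> r!q < y" using rq j by (meson order.strict_trans)
  have r'le: "\<And>q. q < length r \<Longrightarrow> r'!q \<le> r!q" using j by (auto simp: nth_list_update)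
  have r'y: "\<And>q. q \<le> j \<Longrightarrow> r'!q < y" using j rless by (auto simp: nth_list_update le_less)
  show ?thesis
  proof (cases b)
    case None
    from row_insert_NoneD[OF si[unfolded None]] have s': "s' = s @ [y]" "\<forall>z\<in>set s. \<not> y < z" by auto
    have "length s \<le> j"
    proof (rule ccontr)
      assume "\<not> length s \<le> j"
      then have "r!j < s!j" using d by (auto simp: dominates_def)
      then show False using s' j by (metis \<open>\<not> length s \<le> j\<close> not_le nth_mem)
    qed
    then show ?thesis using d s' j r'le r'y
      by (auto simp: dominates_def nth_append less_Suc_eq)
  next
    case (Some z)
    from row_insert_SomeD[OF si[unfolded Some]] obtain j' where j': "j'<length s" "s!j' = z" "y < z"
      "s' = s[j':=y]" "\<forall>q<j'. \<not> y < s!q" by blast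
    have "j' \<le> j"
    proof (rule ccontr)
      assume "\<not> j' \<le> j"
      then have "j < length s" using j' by auto
      then have "y < s!j" using d j by (auto simp: dominates_def)
      then show False using j' \<open>\<not> j' \<le> j\<close> by auto
    qed
    show ?thesis using d j' j r'le r'y \<open>j' \<le> j\<close>
      by (auto simp: dominates_def nth_list_update)
  qed
qed

lemma snd_rs_insert_le: "snd (rs_insert x T) \<le> length T"
  by (induction x T rule: rs_insert.induct) (auto split: prod.splits option.splits)

lemma mset_concat_rs_insert: "mset (concat (fst (rs_insert x T))) = add_mset x (mset (concat T))"
proof (induction x T rule: rs_insert.induct)
  case (1 x) then show ?case by simp
next
  case (2 x r rs)
  obtain r' b where rb: "row_insert x r = (r', b)" by fastforce
  note m = mset_row_insert[OF rb]
  show ?case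
  proof (cases b)
    case None then show ?thesis using rb m by simp
  next
    case (Some y)
    obtain rs' i where ri: "rs_insert y rs = (rs', i)" by fastforce
    have "mset (concat rs') = add_mset y (mset (concat rs))" using 2[OF rb[symmetric] Some] ri by simp
    then show ?thesis using rb m Some ri by simp
  qed
qed

definition add_cell :: "nat \<Rightarrow> nat list \<Rightarrow> nat list" where
  "add_cell i l = (if i < length l then l[i := Suc (l!i)] else l @ [1])"

lemma shape_rs_insert: "map length (fst (rs_insert x T)) = add_cell (snd (rs_insert x T)) (map length T)"
proof (induction x T rule: rs_insert.induct)
  case (1 x) then show ?case by (simp add: add_cell_def)
next
  case (2 x r rs)
  obtain r' b where rb: "row_insert x r = (r', b)" by fastforce
  show ?case
  proof (cases b)
    case None then show ?thesis using rb row_insert_NoneD[OF rb[unfolded None]] by (simp add: add_cell_def)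
  next
    case (Some y)
    obtain rs' i where ri: "rs_insert y rs = (rs', i)" by fastforce
    have ih: "map length rs' = add_cell i (map length rs)" using 2[OF rb[symmetric] Some] ri by simp
    have "i \<le> length rs" using snd_rs_insert_le[of y rs] ri by simp
    then show ?thesis using rb Some ri ih length_row_insert_Some[OF rb[unfolded Some]]
      by (auto simp: add_cell_def map_update)
  qed
qed

lemma add_cell_inj:
  assumes "add_cell i a = add_cell i b" "i \<le> length a" "i \<le> length b" "0 \<notin> set a" "0 \<notin> set b"
  shows "a = b"
proof -
  consider "i < length a" "i < length b" | "i < length a" "i = length b" | "i = length a" "i < length b"
    | "i = length a" "i = length b" using assms(2,3) by (metis le_neq_implies_less)
  then show ?thesis
  proof cases
    case 1
    then have e: "a[i := Suc (a!i)] = b[i := Suc (b!i)]" using assms(1) by (simp add: add_cell_def)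
    then have l: "length a = length b" by (metis length_list_update)
    have ai: "a!i = b!i" using e 1 by (metis Suc_inject nth_list_update_eq)
    show ?thesis
    proof (rule nth_equalityI[OF l])
      fix q assume "q < length a"
      show "a!q = b!q"
      proof (cases "q = i")
        case True then show ?thesis using ai by simp
      next
        case False then show ?thesis using e by (metis nth_list_update_neq)
      qed
    qed
  next
    case 2
    then have e: "a[i := Suc (a!i)] = b @ [1]" using assms(1) by (simp add: add_cell_def)
    then have "length a = Suc (length b)" by (metis length_append_singleton length_list_update)
    then have "a[i := Suc (a!i)] ! i = 1" using e 2 by (simp add: nth_append)
    then have "a!i = 0" using 2 by simp
    then show ?thesis using assms(4) 2 by (metis nth_mem)
  next
    case 3
    then have e: "b[i := Suc (b!i)] = a @ [1]" using assms(1) by (simp add: add_cell_def)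
    then have "length b = Suc (length a)" by (metis length_append_singleton length_list_update)
    then have "b[i := Suc (b!i)] ! i = 1" using e 3 by (simp add: nth_append)
    then have "b!i = 0" using 3 by simp
    then show ?thesis using assms(5) 3 by (metis nth_mem)
  next
    case 4
    then show ?thesis using assms(1) by (simp add: add_cell_def)
  qed
qed

lemma tableau_rs_insert:
  "tableau T \<Longrightarrow> distinct (concat T) \<Longrightarrow> x \<notin> set (concat T) \<Longrightarrow> tableau (fst (rs_insert x T))"
proof (induction x T rule: rs_insert.induct)
  case (1 x) then show ?case by (simp add: tableau_Cons)
next
  case (2 x r rs)
  obtain r' b where rb: "row_insert x r = (r', b)" by fastforce
  have sr: "sorted_wrt (<) r" "r \<noteq> []" "tableau rs" and hd: "rs \<noteq> [] \<Longrightarrow> dominates r (hd rs)"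
    using 2(2) by (auto simp: tableau_Cons)
  have xr: "x \<notin> set r" using 2(4) by auto
  have sr': "sorted_wrt (<) r'" using sorted_row_insert[OF sr(1) xr] rb by simp
  show ?case
  proof (cases b)
    case None
    note N = row_insert_NoneD[OF rb[unfolded None]]
    have "rs \<noteq> [] \<Longrightarrow> dominates r' (hd rs)" using hd N by (auto simp: dominates_def nth_append)
    then show ?thesis using rb None sr sr' N by (auto simp: tableau_Cons)
  next
    case (Some y)
    obtain rs' i where ri: "rs_insert y rs = (rs', i)" by fastforce
    from row_insert_SomeD[OF rb[unfolded Some]] obtain j where "j < length r" "r!j = y" by blast
    then have yr: "y \<in> set r" by auto
    have yrs: "y \<notin> set (concat rs)" using yr 2(3) by auto
    have ih: "tableau rs'" using 2(1)[OF rb[symmetric] Some sr(3)] 2(3) yrs ri by simp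
    have "dominates r' (hd rs')"
    proof (cases rs)
      case Nil
      then have "rs' = [[y]]" using ri by simp
      moreover have "dominates r' [y]"
        using dominates_row_insert[OF sr(1) _ rb[unfolded Some] xr, of "[]" "[y]" None] by (simp add: dominates_def)
      ultimately show ?thesis by simp
    next
      case (Cons s rest)
      obtain s' c where sc: "row_insert y s = (s', c)" by fastforce
      have "hd rs' = s'" using ri sc Cons by (auto split: option.splits prod.splits)
      moreover have "dominates r' s'"
        using 2(2) Cons by (intro dominates_row_insert[OF sr(1) _ rb[unfolded Some] xr sc]) (auto simp: tableau_Cons)
      ultimately show ?thesis by simp
    qed
    then show ?thesis using rb Some ri ih sr' length_row_insert_Some[OF rb[unfolded Some]] sr(2)
      by (auto simp: tableau_Cons)
  qed
qed

section \<open>Reverse insertion\<close>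

text \<open>Reverse bumping: \<open>y\<close> replaces the largest entry of \<open>r'\<close> below \<open>y\<close>, which is returned.\<close>

definition row_uninsert :: "nat \<Rightarrow> nat list \<Rightarrow> nat list \<times> nat" where
  "row_uninsert y r' = (butlast (takeWhile (\<lambda>z. z < y) r') @ [y] @ dropWhile (\<lambda>z. z < y) r',
                 last (takeWhile (\<lambda>z. z < y) r'))"

lemma sorted_dropWhile_gt:
  fixes xs :: "nat list"
  assumes "sorted_wrt (<) xs" "y \<notin> set xs" "z \<in> set (dropWhile (\<lambda>z. z < y) xs)"
  shows "y < z"
proof -
  have s: "sorted_wrt (<) (dropWhile (\<lambda>z. z < y) xs)"
    using assms(1) by (metis sorted_wrt_append takeWhile_dropWhile_id)
  obtain w ws where ww: "dropWhile (\<lambda>z. z < y) xs = w # ws" using assms(3) by (cases "dropWhile (\<lambda>z. z < y) xs") auto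
  have "\<not> w < y" using ww by (metis dropWhile_eq_Cons_conv)
  moreover have "w \<noteq> y" using ww assms(2) by (metis list.set_intros(1) set_dropWhileD)
  ultimately have "y < w" by auto
  then show ?thesis using s ww assms(3) by auto
qed

lemma row_uninsert_correct:
  assumes sr: "sorted_wrt (<) r'" and yr: "y \<notin> set r'" and z: "z \<in> set r'" "z < y"
    and u: "row_uninsert y r' = (r, x)"
  shows "row_insert x r = (r', Some y) \<and> sorted_wrt (<) r \<and> x \<in> set r' \<and> x < y
     \<and> (\<exists>j<length r'. r'!j = x \<and> r = r'[j:=y] \<and> (\<forall>q<length r'. r'!q < y \<longrightarrow> q \<le> j))"
proof -
  define a where "a = takeWhile (\<lambda>z. z < y) r'"
  define b where "b = dropWhile (\<lambda>z. z < y) r'"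
  have ab: "r' = a @ b" by (simp add: a_def b_def)
  have sa: "sorted_wrt (<) a" and sb: "sorted_wrt (<) b"
    using sr ab by (metis sorted_wrt_append)+
  have ay: "\<forall>u\<in>set a. u < y" by (auto simp: a_def dest: set_takeWhileD)
  have by': "\<forall>v\<in>set b. y < v" using sorted_dropWhile_gt[OF sr yr] by (auto simp: b_def)
  have "a \<noteq> []"
  proof
    assume "a = []"
    then have "z \<in> set b" using z ab by auto
    then show False using by' z by auto
  qed
  then have a_split: "a = butlast a @ [last a]" by simp
  have rx: "r = butlast a @ [y] @ b" "x = last a" using u by (auto simp: row_uninsert_def a_def b_def)
  have xa: "x \<in> set a" using rx \<open>a \<noteq> []\<close> by auto
  have xy: "x < y" using xa ay by auto
  have bl: "\<forall>u\<in>set (butlast a). u < x"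
    using sa a_split rx(2) by (metis sorted_wrt_append list.set_intros(1) set_ConsD empty_iff set_simps(1))
  have bl': "\<forall>u\<in>set (butlast a). \<not> x < u" using bl by auto
  have "row_insert x r = (butlast a @ x # b, Some y)"
    using row_insert_append[OF bl', of "[y] @ b"] xy rx by auto
  also have "butlast a @ x # b = r'" using ab a_split rx by (metis append.assoc append_Cons append_Nil)
  finally have ri: "row_insert x r = (r', Some y)" .
  have sbl: "sorted_wrt (<) (butlast a)" using sa a_split by (metis sorted_wrt_append)
  have srr: "sorted_wrt (<) r" using rx sbl sb by' bl xy
    by (auto simp: sorted_wrt_append) (meson order.strict_trans)
  define j where "j = length a - 1"
  have la: "length a > 0" using \<open>a \<noteq> []\<close> by simp
  have j1: "j < length r'" using la ab unfolding j_def by (metis diff_less length_append less_numeral_extra(1) trans_less_add1)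
  have j: "j < length r'" "r'!j = x" using j1 ab la rx by (auto simp: j_def nth_append last_conv_nth)
  have "r'[j:=y] = butlast a @ [y] @ b"
  proof -
    have "r'[j:=y] = a[j:=y] @ b" using ab \<open>a \<noteq> []\<close> by (simp add: j_def list_update_append)
    also have "a[j:=y] = butlast a @ [y]" using a_split j_def
      by (metis length_butlast list_update_length)
    finally show ?thesis by simp
  qed
  then have rj: "r = r'[j:=y]" using rx by simp
  have "\<forall>q<length r'. r'!q < y \<longrightarrow> q \<le> j"
  proof (intro allI impI)
    fix q assume "q < length r'" "r'!q < y"
    show "q \<le> j"
    proof (rule ccontr)
      assume "\<not> q \<le> j"
      then have "q \<ge> length a" by (simp add: j_def)
      then have "r'!q \<in> set b" using ab \<open>q < length r'\<close> by (simp add: nth_append)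
      then show False using by' \<open>r'!q < y\<close> by auto
    qed
  qed
  then show ?thesis using ri srr xa ab xy j rj by auto
qed

text \<open>Reverse insertion: delete the last cell of row \<open>i\<close> and bump it back up to the first row.\<close>

fun rs_uninsert :: "nat list list \<Rightarrow> nat \<Rightarrow> nat list list \<times> nat" where
  "rs_uninsert [] i = ([], 0)"
| "rs_uninsert (r # rs) 0 = (if butlast r = [] then rs else butlast r # rs, last r)"
| "rs_uninsert (r # rs) (Suc i) =
     (case rs_uninsert rs i of (rs0, y) \<Rightarrow> (case row_uninsert y r of (r0, x) \<Rightarrow> (r0 # rs0, x)))"

text \<open>The relation between a row \<open>r\<close> and the row \<open>r'\<close> obtained from it by inserting \<open>x\<close>;
  reverse insertion needs it to restore column strictness one row further up.\<close>

definition inserted_row :: "nat \<Rightarrow> nat list \<Rightarrow> nat list \<Rightarrow> bool" where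
  "inserted_row x r r' \<longleftrightarrow>
     length r \<le> length r' \<and> (\<forall>q<length r. r'!q \<le> r!q \<and> (x \<le> r'!q \<longrightarrow> x < r!q))"

lemma inserted_row_butlast:
  assumes "sorted_wrt (<) r'" "r' \<noteq> []"
  shows "inserted_row (last r') (butlast r') r'"
proof -
  have "butlast r' ! q < last r'" if "q < length (butlast r')" for q
    using assms that sorted_wrt_nth_less[OF assms(1), of q "length r' - 1"]
    by (simp add: nth_butlast last_conv_nth)
  then show ?thesis by (auto simp: inserted_row_def nth_butlast dest: leD)
qed

lemma inserted_row_update:
  assumes "distinct r'" "j < length r'" "r'!j = x" "x < y"
  shows "inserted_row x (r'[j:=y]) r'"
proof -
  have "x \<noteq> r'!q" if "q < length r'" "q \<noteq> j" for q
    using assms that by (metis nth_eq_iff_index_eq)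
  then show ?thesis using assms by (auto simp: inserted_row_def nth_list_update le_less)
qed

lemma dominates_row_uninsert:
  assumes dom: "dominates r' s'" and s': "sorted_wrt (<) s'" "y \<in> set s'" "inserted_row y s s'"
    and j: "j < length r'" "\<forall>q<length r'. r'!q < y \<longrightarrow> q \<le> j"
  shows "dominates (r'[j:=y]) s"
proof -
  obtain p where p: "p < length s'" "s'!p = y" using s'(2) by (metis in_set_conv_nth)
  then have "p \<le> j" using dom j by (auto simp: dominates_def)
  have "r'[j:=y] ! q < s!q" if q: "q < length s" for q
  proof (cases "q = j")
    case True
    then have "y \<le> s'!q"
      using p \<open>p \<le> j\<close> q s' sorted_wrt_nth_less[OF s'(1), of p q] by (fastforce simp: inserted_row_def)
    then show ?thesis using True q j s'(3) by (auto simp: inserted_row_def)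
  next
    case False
    then have "r'[j:=y] ! q = r'!q" by simp
    also have "\<dots> < s'!q" using dom q s'(3) by (auto simp: dominates_def inserted_row_def)
    also have "\<dots> \<le> s!q" using q s'(3) by (auto simp: inserted_row_def)
    finally show ?thesis .
  qed
  then show ?thesis using dom s'(3) by (auto simp: dominates_def inserted_row_def)
qed

lemma rs_uninsert_correct:
  "tableau T' \<Longrightarrow> distinct (concat T') \<Longrightarrow> i < length T' \<Longrightarrow>
   (Suc i < length T' \<longrightarrow> length (T'!Suc i) < length (T'!i)) \<Longrightarrow> rs_uninsert T' i = (T, x) \<Longrightarrow>
   rs_insert x T = (T', i) \<and> tableau T \<and> mset (concat T') = add_mset x (mset (concat T))
   \<and> x \<in> set (hd T') \<and> (T \<noteq> [] \<longrightarrow> inserted_row x (hd T) (hd T'))"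
proof (induction T' i arbitrary: T x rule: rs_uninsert.induct)
  case (1 i) then show ?case by simp
next
  case (2 r' rs')
  have r': "r' \<noteq> []" "sorted_wrt (<) r'" "tableau rs'" "rs' \<noteq> [] \<Longrightarrow> dominates r' (hd rs')"
    using 2(1) by (auto simp: tableau_Cons)
  have x: "x = last r'" using 2(5) by (simp split: if_splits)
  have r'_eq: "r' = butlast r' @ [x]" using r' x by simp
  show ?case
  proof (cases "butlast r' = []")
    case True
    have "rs' = []"
    proof (rule ccontr)
      assume "rs' \<noteq> []"
      then have "length (hd rs') = 0" using 2(4) r'_eq True by (simp add: hd_conv_nth)
      then show False using r'(3) \<open>rs' \<noteq> []\<close> by (auto simp: tableau_def)
    qed
    then show ?thesis using 2(5) True r'_eq by (auto split: if_splits)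
  next
    case False
    then have T: "T = butlast r' # rs'" using 2(5) by simp
    have "\<forall>u\<in>set (butlast r'). u < x"
      using r'(2) r'_eq by (metis sorted_wrt_append list.set_intros(1))
    then have ins: "row_insert x (butlast r') = (r', None)"
      using row_insert_append[of "butlast r'" x "[]"] r'_eq by fastforce
    have "rs' \<noteq> [] \<Longrightarrow> dominates (butlast r') (hd rs')"
      using r'(4) 2(4) by (auto simp: dominates_def nth_butlast hd_conv_nth)
    moreover have "sorted_wrt (<) (butlast r')"
      using r'(2) r'_eq by (metis sorted_wrt_append)
    ultimately have "tableau T"
      using T False r' by (auto simp: tableau_Cons)
    moreover have "mset r' = add_mset x (mset (butlast r'))" by (subst r'_eq) simp
    ultimately show ?thesis using T ins x r' inserted_row_butlast[OF r'(2,1)] by auto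
  qed
next
  case (3 r' rs' i)
  have r': "r' \<noteq> []" "sorted_wrt (<) r'" "tableau rs'" and rs': "rs' \<noteq> []" "dominates r' (hd rs')"
    using 3(2,4) by (auto simp: tableau_Cons)
  obtain rs y where uy: "rs_uninsert rs' i = (rs, y)" by fastforce
  obtain r x' where ux: "row_uninsert y r' = (r, x')" by fastforce
  have T: "T = r # rs" "x = x'" using 3(6) uy ux by auto
  have IH: "rs_insert y rs = (rs', i)" "tableau rs" "mset (concat rs') = add_mset y (mset (concat rs))"
    "y \<in> set (hd rs')" "rs \<noteq> [] \<Longrightarrow> inserted_row y (hd rs) (hd rs')"
    using 3(1)[OF r'(3) _ _ _ uy] 3(3-5) by auto
  obtain p where "p < length (hd rs')" "hd rs'!p = y" using IH(4) by (metis in_set_conv_nth)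
  then have "r'!p < y" "r'!p \<in> set r'" using rs'(2) by (auto simp: dominates_def)
  moreover have "y \<notin> set r'"
    using 3(3) IH(4) rs' by (cases rs') auto
  ultimately obtain j where
    U: "row_insert x' r = (r', Some y)" "sorted_wrt (<) r" "x' \<in> set r'" "x' < y"
       "j < length r'" "r'!j = x'" "r = r'[j:=y]" "\<forall>q<length r'. r'!q < y \<longrightarrow> q \<le> j"
    using row_uninsert_correct[OF r'(2) _ _ _ ux] by blast
  have "sorted_wrt (<) (hd rs')" using r'(3) rs'(1) by (cases rs') (auto simp: tableau_Cons)
  then have "rs \<noteq> [] \<Longrightarrow> dominates r (hd rs)"
    using dominates_row_uninsert[OF rs'(2) _ IH(4) IH(5) U(5,8)] U(7) by simp
  then have "tableau T" using T U IH r'(1) by (auto simp: tableau_Cons)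
  moreover have "rs_insert x T = (r' # rs', Suc i)" using T U(1) IH by simp
  moreover have "mset (concat (r' # rs')) = add_mset x (mset (concat T))"
    using U(5-7) IH(3) T U(3) by (simp add: mset_update insert_DiffM)
  moreover have "inserted_row x' r r'"
    using inserted_row_update[OF _ U(5,6,4)] r'(2) U(7) by (simp add: strict_sorted_iff)
  ultimately show ?case using U(3) T by simp
qed

section \<open>Injectivity of insertion and the row bumping lemma\<close>

lemma row_insert_inj:
  assumes s1: "sorted_wrt (<) r" and s2: "sorted_wrt (<) r2" and e: "row_insert x r = row_insert x2 r2"
  shows "x = x2 \<and> r = r2"
proof -
  obtain r' b where rb: "row_insert x r = (r', b)" by fastforce
  then have rb2: "row_insert x2 r2 = (r', b)" using e by simp
  show ?thesis
  proof (cases b)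
    case None
    then show ?thesis using row_insert_NoneD[OF rb[unfolded None]] row_insert_NoneD[OF rb2[unfolded None]] by auto
  next
    case (Some y)
    from row_insert_SomeD[OF rb[unfolded Some]] obtain j where
      j: "j<length r" "r!j = y" "x < y" "r' = r[j:=x]" "\<forall>q<j. \<not> x < r!q" by blast
    from row_insert_SomeD[OF rb2[unfolded Some]] obtain j2 where
      j2: "j2<length r2" "r2!j2 = y" "x2 < y" "r' = r2[j2:=x2]" "\<forall>q<j2. \<not> x2 < r2!q" by blast
    have len: "length r = length r2" using j(4) j2(4) by (metis length_list_update)
    consider "j = j2" | "j < j2" | "j2 < j" by linarith
    then show ?thesis
    proof cases
      case 1
      then have "x = x2" using j j2 by (metis nth_list_update_eq)
      moreover have "r = r2"
      proof -
        have "r = r'[j:=y]" using j by (metis list_update_id list_update_overwrite)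
        also have "\<dots> = r2" using j2 1 by (metis list_update_id list_update_overwrite)
        finally show ?thesis .
      qed
      ultimately show ?thesis by simp
    next
      case 2
      have "r'!j2 = r!j2" using j 2 by simp
      moreover have "r'!j2 = x2" using j2 by simp
      moreover have "r!j < r!j2" using s1 2 j2 len by (simp add: sorted_wrt_nth_less)
      ultimately show ?thesis using j j2 by simp
    next
      case 3
      have "r'!j = r2!j" using j2 3 by simp
      moreover have "r'!j = x" using j by simp
      moreover have "r2!j2 < r2!j" using s2 3 j len by (simp add: sorted_wrt_nth_less)
      ultimately show ?thesis using j j2 by simp
    qed
  qed
qed

lemma rs_insert_Cons_neq_singleton:
  "r \<noteq> [] \<Longrightarrow> rs_insert x (r # rs) \<noteq> ([[y]], 0)"
  by (auto dest: row_insert_NoneD split: prod.splits option.splits)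

lemma rs_insert_inj:
  "(\<forall>r\<in>set T. r \<noteq> [] \<and> sorted_wrt (<) r) \<Longrightarrow> (\<forall>r\<in>set T2. r \<noteq> [] \<and> sorted_wrt (<) r) \<Longrightarrow>
   rs_insert x T = rs_insert x2 T2 \<Longrightarrow> x = x2 \<and> T = T2"
proof (induction T arbitrary: x x2 T2)
  case Nil
  then show ?case using rs_insert_Cons_neq_singleton by (cases T2) (simp, metis list.set_intros(1) rs_insert.simps(1))
next
  case (Cons r rs)
  obtain r2 rs2 where T2: "T2 = r2 # rs2"
    using Cons.prems rs_insert_Cons_neq_singleton by (cases T2) (simp, metis list.set_intros(1) rs_insert.simps(1))
  obtain r' b where rb: "row_insert x r = (r', b)" by fastforce
  obtain r2' b2 where rb2: "row_insert x2 r2 = (r2', b2)" by fastforce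
  have rows: "sorted_wrt (<) r" "sorted_wrt (<) r2" using Cons.prems T2 by auto
  show ?case
  proof (cases b)
    case None
    then have "b2 = None" "r' = r2'" "rs = rs2"
      using Cons.prems(3) T2 rb rb2 by (auto split: option.splits prod.splits)
    moreover from this have "row_insert x r = row_insert x2 r2" using rb rb2 None by simp
    ultimately show ?thesis using row_insert_inj[OF rows] T2 by blast
  next
    case (Some y)
    then obtain y2 where "b2 = Some y2" "r' = r2'" "rs_insert y rs = rs_insert y2 rs2"
      using Cons.prems(3) T2 rb rb2 by (auto split: option.splits prod.splits)
    moreover have "y = y2 \<and> rs = rs2"
      using Cons.IH[OF _ _ calculation(3)] Cons.prems(1,2) T2 by simp
    moreover have "row_insert x r = row_insert x2 r2" using calculation rb rb2 Some by simp
    ultimately show ?thesis using row_insert_inj[OF rows] T2 by blast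
  qed
qed

lemma row_insert_twice_less:
  assumes r: "sorted_wrt (<) r" "x \<notin> set r" and xy: "x < y"
    and ins: "row_insert x r = (r', b)" "row_insert y r' = (r'', Some y1)"
  shows "\<exists>x1. b = Some x1 \<and> x1 < y1 \<and> y1 \<in> set r"
proof (cases b)
  case None
  then have "\<forall>z\<in>set r'. \<not> y < z" using row_insert_NoneD[OF ins(1)[unfolded None]] xy by auto
  then show ?thesis using row_insert_append[of r' y "[]"] ins(2) by simp
next
  case (Some x1)
  from row_insert_SomeD[OF ins(1)[unfolded Some]] obtain j where
    j: "j < length r" "r!j = x1" "r' = r[j:=x]" "\<forall>q<j. \<not> x < r!q" by blast
  from row_insert_SomeD[OF ins(2)] obtain j' where
    j': "j' < length r'" "r'!j' = y1" "\<forall>q<j'. \<not> y < r'!q" "y < y1" by blast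
  have "j < j'"
  proof (rule ccontr)
    assume "\<not> j < j'"
    then have "r'!j' \<le> x"
      using j r(2) by (metis leI less_imp_le_nat linorder_neqE_nat nth_list_update nth_mem)
    then show False using j' xy by simp
  qed
  then have "y1 = r!j'" "j' < length r" using j j' by auto
  then show ?thesis using Some j sorted_wrt_nth_less[OF r(1) \<open>j < j'\<close>] by auto
qed

lemma row_insert_twice_greater:
  assumes r: "sorted_wrt (<) r" "x \<notin> set r" and yx: "y < x"
    and ins: "row_insert x r = (r', b)" "row_insert y r' = (r'', c)"
  shows "\<exists>y1. c = Some y1 \<and> y1 \<in> insert x (set r) \<and> (\<forall>x1. b = Some x1 \<longrightarrow> y1 < x1)"
proof -
  have "x \<in> set r'" using mem_row_insert[of x r] ins(1) by simp
  then obtain y1 where c: "c = Some y1"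
    using row_insert_NoneD[of y r' r''] ins(2) yx by (cases c) auto
  from row_insert_SomeD[OF ins(2)[unfolded c]] obtain j' where
    j': "j' < length r'" "r'!j' = y1" "\<forall>q<j'. \<not> y < r'!q" by blast
  have "y1 < x1" if "b = Some x1" for x1
  proof -
    from row_insert_SomeD[OF ins(1)[unfolded that]] obtain j where
      j: "j < length r" "r!j = x1" "x < x1" "r' = r[j:=x]" by blast
    have "j' \<le> j" using j j'(3) yx by (metis leI nth_list_update_eq)
    then show ?thesis
      using j j' r(1) by (cases "j' = j") (auto simp: sorted_wrt_nth_less)
  qed
  moreover have "y1 \<in> insert x (set r)"
    using j' set_row_insert[of x r] ins(1) by force
  ultimately show ?thesis using c by blast
qed

lemma row_bumping:
  "(\<forall>r\<in>set T. sorted_wrt (<) r) \<Longrightarrow> distinct (concat T) \<Longrightarrow> x \<notin> set (concat T) \<Longrightarrow>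
   y \<notin> set (concat T) \<Longrightarrow> rs_insert x T = (T1, r1) \<Longrightarrow> rs_insert y T1 = (T2, r2) \<Longrightarrow>
   (x < y \<longrightarrow> r2 \<le> r1) \<and> (y < x \<longrightarrow> r1 < r2)"
proof (induction T arbitrary: x y T1 r1 T2 r2)
  case Nil
  then show ?case by (auto split: if_splits prod.splits)
next
  case (Cons r rs)
  have r: "sorted_wrt (<) r" "x \<notin> set r" and rs: "\<forall>r\<in>set rs. sorted_wrt (<) r" "distinct (concat rs)"
    using Cons.prems by auto
  obtain r' b where rb: "row_insert x r = (r', b)" by fastforce
  obtain r'' c where rc: "row_insert y r' = (r'', c)" by fastforce
  have fresh: "z \<notin> set (concat rs)" if "z \<in> insert x (set r)" for z
    using that Cons.prems(2,3) by auto
  show ?case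
  proof (intro conjI impI)
    assume "x < y"
    show "r2 \<le> r1"
    proof (cases c)
      case (Some y1)
      obtain x1 where x1: "b = Some x1" "x1 < y1" "y1 \<in> set r"
        using row_insert_twice_less[OF r \<open>x < y\<close> rb rc[unfolded Some]] by blast
      then have "x1 \<in> set r" using row_insert_SomeD[of x r r' x1] rb by force
      obtain rs1 r1' where ri: "rs_insert x1 rs = (rs1, r1')" by fastforce
      obtain rs2 r2' where ri2: "rs_insert y1 rs1 = (rs2, r2')" by fastforce
      have "r2' \<le> r1'" using Cons.IH[OF rs fresh fresh ri ri2] \<open>x1 \<in> set r\<close> x1 by simp
      then show ?thesis using Cons.prems(5,6) rb rc Some x1(1) ri ri2 by auto
    qed (use Cons.prems(5,6) rb rc in \<open>auto split: option.splits prod.splits\<close>)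
  next
    assume "y < x"
    obtain y1 where y1: "c = Some y1" "y1 \<in> insert x (set r)" "\<And>x1. b = Some x1 \<Longrightarrow> y1 < x1"
      using row_insert_twice_greater[OF r \<open>y < x\<close> rb rc] by blast
    show "r1 < r2"
    proof (cases b)
      case (Some x1)
      then have "x1 \<in> set r" using row_insert_SomeD[of x r r' x1] rb by force
      obtain rs1 r1' where ri: "rs_insert x1 rs = (rs1, r1')" by fastforce
      obtain rs2 r2' where ri2: "rs_insert y1 rs1 = (rs2, r2')" by fastforce
      have "r1' < r2'" using Cons.IH[OF rs fresh fresh ri ri2] \<open>x1 \<in> set r\<close> y1 Some by simp
      then show ?thesis using Cons.prems(5,6) rb rc Some y1(1) ri ri2 by auto
    qed (use Cons.prems(5,6) rb rc y1(1) in \<open>auto split: prod.splits\<close>)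
  qed
qed

section \<open>Insertion commutes with restriction to small entries\<close>

definition restrict_tableau :: "nat \<Rightarrow> nat list list \<Rightarrow> nat list list" where
  "restrict_tableau k T = filter (\<lambda>r. r \<noteq> []) (map (filter (\<lambda>z. z \<le> k)) T)"

lemma filter_list_update_notP:
  "j < length xs \<Longrightarrow> \<not> P v \<Longrightarrow> \<not> P (xs!j) \<Longrightarrow> filter P (xs[j:=v]) = filter P xs"
  by (induction xs arbitrary: j) (auto split: nat.splits simp: nth_Cons)

lemma restrict_tableau_rs_insert_large: "k < x \<Longrightarrow> restrict_tableau k (fst (rs_insert x T)) = restrict_tableau k T"
proof (induction x T rule: rs_insert.induct)
  case (1 x) then show ?case by (simp add: restrict_tableau_def)
next
  case (2 x r rs)
  obtain r' b where rb: "row_insert x r = (r', b)" by fastforce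
  show ?case
  proof (cases b)
    case None then show ?thesis using row_insert_NoneD[OF rb[unfolded None]] rb 2(2) by (simp add: restrict_tableau_def)
  next
    case (Some y)
    from row_insert_SomeD[OF rb[unfolded Some]] obtain j where
      j: "j<length r" "r!j = y" "x < y" "r' = r[j:=x]" by blast
    obtain rs' i where ri: "rs_insert y rs = (rs', i)" by fastforce
    have ih: "restrict_tableau k rs' = restrict_tableau k rs" using 2(1)[OF rb[symmetric] Some] 2(2) j ri by simp
    have "filter (\<lambda>z. z \<le> k) r' = filter (\<lambda>z. z \<le> k) r"
      using filter_list_update_notP[of j r "\<lambda>z. z \<le> k" x] j 2(2) by simp
    then show ?thesis using rb Some ri ih by (simp add: restrict_tableau_def)
  qed
qed

lemma sorted_filter_le_takeWhile:
  fixes r :: "nat list"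
  assumes "sorted_wrt (<) r"
  shows "filter (\<lambda>z. z \<le> k) r = takeWhile (\<lambda>z. z \<le> k) r \<and> (\<forall>z\<in>set (dropWhile (\<lambda>z. z \<le> k) r). k < z)"
proof -
  have s: "sorted_wrt (<) (dropWhile (\<lambda>z. z \<le> k) r)"
    using assms by (metis sorted_wrt_append takeWhile_dropWhile_id)
  have gt: "\<forall>z\<in>set (dropWhile (\<lambda>z. z \<le> k) r). k < z"
  proof (cases "dropWhile (\<lambda>z. z \<le> k) r")
    case Nil then show ?thesis by (simp only: Nil) simp
  next
    case (Cons w ws)
    then have "k < w" by (metis dropWhile_eq_Cons_conv not_le)
    then show ?thesis using s Cons by auto
  qed
  have "filter (\<lambda>z. z \<le> k) r = filter (\<lambda>z. z \<le> k) (takeWhile (\<lambda>z. z \<le> k) r @ dropWhile (\<lambda>z. z \<le> k) r)"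
    by simp
  also have "\<dots> = takeWhile (\<lambda>z. z \<le> k) r"
  proof -
    have "filter (\<lambda>z. z \<le> k) (dropWhile (\<lambda>z. z \<le> k) r) = []" using gt by (auto simp: filter_empty_conv)
    moreover have "filter (\<lambda>z. z \<le> k) (takeWhile (\<lambda>z. z \<le> k) r) = takeWhile (\<lambda>z. z \<le> k) r"
      by (rule filter_True) (auto dest: set_takeWhileD)
    ultimately show ?thesis by (simp only: filter_append) simp
  qed
  finally show ?thesis using gt by simp
qed

lemma row_insert_filter_le:
  assumes r: "sorted_wrt (<) r" and x: "x \<le> k" and ins: "row_insert x r = (r', b)"
  shows "row_insert x (filter (\<lambda>z. z \<le> k) r)
    = (filter (\<lambda>z. z \<le> k) r', if \<exists>y. b = Some y \<and> y \<le> k then b else None)"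
proof -
  define s where "s = takeWhile (\<lambda>z. z \<le> k) r"
  define l where "l = dropWhile (\<lambda>z. z \<le> k) r"
  have r_eq: "r = s @ l" and s: "filter (\<lambda>z. z \<le> k) r = s" and l: "\<forall>z\<in>set l. k < z"
    using sorted_filter_le_takeWhile[OF r, of k] by (auto simp: s_def l_def)
  have sk: "\<forall>z\<in>set s. z \<le> k" by (auto simp: s_def dest: set_takeWhileD)
  have filter_l: "filter (\<lambda>z. z \<le> k) (u @ l) = u" if "\<forall>z\<in>set u. z \<le> k" for u
    using that l by (auto intro!: filter_True simp: filter_empty_conv)
  obtain s' c where sc: "row_insert x s = (s', c)" by fastforce
  show ?thesis
  proof (cases c)
    case (Some y)
    obtain j where j: "j < length s" "s!j = y" "s' = s[j:=x]" using row_insert_SomeD[OF sc[unfolded Some]] by blast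
    have "r' = s' @ l" "b = Some y" using row_insert_append_Some[OF sc[unfolded Some]] ins r_eq by auto
    moreover have "\<forall>z\<in>set s'. z \<le> k" "y \<le> k" using j sk x set_update_subset_insert by fastforce+
    ultimately show ?thesis using s sc Some filter_l by simp
  next
    case None
    then have s': "s' = s @ [x]" "\<forall>z\<in>set s. \<not> x < z" using row_insert_NoneD sc by auto
    show ?thesis
    proof (cases l)
      case Nil
      then have "r' = s @ [x]" "b = None" using ins r_eq s' sc None by auto
      then show ?thesis using s sc None s' sk x by simp
    next
      case (Cons y l')
      then have "k < y" "\<forall>z\<in>set l'. k < z" using l by auto
      then have "r' = s @ x # l'" "b = Some y" "filter (\<lambda>z. z \<le> k) l' = []"
        using row_insert_append[OF s'(2), of l] ins r_eq Cons x by (auto simp: filter_empty_conv)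
      then show ?thesis using s sc None s' sk x \<open>k < y\<close> by simp
    qed
  qed
qed

lemma restrict_tableau_rs_insert_small:
  "tableau T \<Longrightarrow> x \<le> k \<Longrightarrow> restrict_tableau k (fst (rs_insert x T)) = fst (rs_insert x (restrict_tableau k T))"
proof (induction x T rule: rs_insert.induct)
  case (1 x) then show ?case by (simp add: restrict_tableau_def)
next
  case (2 x r rs)
  have r: "sorted_wrt (<) r" "tableau rs" using 2(2) by (auto simp: tableau_Cons)
  obtain r' b where ins: "row_insert x r = (r', b)" by fastforce
  note ins_le = row_insert_filter_le[OF r(1) 2(3) ins]
  have r'_small: "filter (\<lambda>z. z \<le> k) r' \<noteq> []"
    using mem_row_insert[of x r] ins 2(3) by (force simp: filter_empty_conv)
  have restrict_Cons: "restrict_tableau k (u # us) =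
      (if filter (\<lambda>z. z \<le> k) u = [] then restrict_tableau k us else filter (\<lambda>z. z \<le> k) u # restrict_tableau k us)"
    for u us by (simp add: restrict_tableau_def)
  show ?case
  proof (cases "\<exists>y. b = Some y \<and> y \<le> k")
    case True
    then obtain y where y: "b = Some y" "y \<le> k" by blast
    then have "filter (\<lambda>z. z \<le> k) r \<noteq> []"
      using row_insert_SomeD[of x r r' y] ins by (force simp: filter_empty_conv)
    then show ?thesis
      using 2(1)[OF ins[symmetric] y(1) r(2) y(2)] ins ins_le y restrict_Cons r'_small
      by (auto split: prod.splits)
  next
    case False
    have tail: "restrict_tableau k (case b of None \<Rightarrow> rs | Some y \<Rightarrow> fst (rs_insert y rs)) = restrict_tableau k rs"
      using False restrict_tableau_rs_insert_large by (cases b) auto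
    have "restrict_tableau k rs = []" if "filter (\<lambda>z. z \<le> k) r = []"
    proof -
      have "k < hd r" using that 2(2) by (cases r) (auto simp: tableau_Cons split: if_splits)
      then have "\<forall>s\<in>set rs. \<forall>z\<in>set s. k < z" using tableau_hd_less[OF 2(2)] by fastforce
      then show ?thesis by (fastforce simp: restrict_tableau_def filter_empty_conv)
    qed
    then show ?thesis
      using ins ins_le False tail restrict_Cons r'_small by (auto split: option.splits prod.splits)
  qed
qed

definition rs_step :: "nat \<Rightarrow> nat list list \<times> nat list list \<times> nat \<Rightarrow> nat list list \<times> nat list list \<times> nat" where
  "rs_step x = (\<lambda>(P, Q, j). case rs_insert x P of (P', i) \<Rightarrow> (P', add_to_row (Suc j) i Q, Suc j))"

lemma fold_rs_step: "fold rs_step w ([], [], 0) = (RS_P w, RS_Q w, length w)"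
proof -
  have "snd (snd (fold rs_step w ([], [], 0))) = length w"
    by (induction w rule: rev_induct) (auto simp: rs_step_def split: prod.splits)
  moreover have "RS w = (case fold rs_step w ([], [], 0) of (P, Q, _) \<Rightarrow> (P, Q))"
    unfolding RS_def rs_step_def by (rule refl)
  ultimately show ?thesis
    by (cases "fold rs_step w ([], [], 0)") (simp add: RS_P_def RS_Q_def)
qed

lemma RS_P_Nil [simp]: "RS_P [] = []" and RS_Q_Nil [simp]: "RS_Q [] = []"
  using fold_rs_step[of "[]"] by simp_all

lemma RS_P_snoc: "RS_P (w @ [x]) = fst (rs_insert x (RS_P w))"
  and RS_Q_snoc: "RS_Q (w @ [x]) = add_to_row (Suc (length w)) (snd (rs_insert x (RS_P w))) (RS_Q w)"
  using fold_rs_step[of "w @ [x]"] fold_rs_step[of w]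
  by (simp_all add: rs_step_def split: prod.splits)

lemma shape_add_to_row: "i \<le> length Q \<Longrightarrow> map length (add_to_row j i Q) = add_cell i (map length Q)"
  by (auto simp: add_to_row_def add_cell_def map_update)

lemma set_concat_add_to_row:
  "i \<le> length Q \<Longrightarrow> set (concat (add_to_row j i Q)) = insert j (set (concat Q))"
proof (cases "i < length Q")
  case True
  have "concat Q = concat (take i Q) @ Q ! i @ concat (drop (Suc i) Q)"
    using id_take_nth_drop[OF True] by (metis concat.simps(2) concat_append)
  then show ?thesis using True by (auto simp: add_to_row_def upd_conv_take_nth_drop)
qed (simp add: add_to_row_def)

lemma RS_invariant:
  "distinct w \<Longrightarrow> tableau (RS_P w) \<and> mset (concat (RS_P w)) = mset w
     \<and> map length (RS_Q w) = map length (RS_P w) \<and> set (concat (RS_Q w)) \<subseteq> {1..length w}"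
proof (induction w rule: rev_induct)
  case (snoc x w)
  then have IH: "tableau (RS_P w)" "mset (concat (RS_P w)) = mset w"
      "map length (RS_Q w) = map length (RS_P w)" "set (concat (RS_Q w)) \<subseteq> {1..length w}"
    by simp_all
  have dP: "distinct (concat (RS_P w))" and xP: "x \<notin> set (concat (RS_P w))"
    using snoc.prems IH(2) by (metis distinct_append mset_eq_imp_distinct_iff,
        metis distinct_append mset_eq_setD disjoint_iff list.set_intros(1) set_append)
  obtain P' i where ri: "rs_insert x (RS_P w) = (P', i)" by fastforce
  have ilQ: "i \<le> length (RS_Q w)"
    using snd_rs_insert_le[of x "RS_P w"] ri IH(3) by (metis length_map snd_conv)
  have "tableau P'" using tableau_rs_insert[OF IH(1) dP xP] ri by simp
  moreover have "mset (concat P') = mset (w @ [x])" using mset_concat_rs_insert[of x "RS_P w"] ri IH(2) by simp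
  moreover have "map length P' = add_cell i (map length (RS_P w))" using shape_rs_insert[of x "RS_P w"] ri by simp
  moreover have "set (concat (add_to_row (Suc (length w)) i (RS_Q w))) \<subseteq> {1..length (w @ [x])}"
    using set_concat_add_to_row[OF ilQ] IH(4) by auto
  ultimately show ?case using shape_add_to_row[OF ilQ] IH(3) ri by (simp add: RS_P_snoc RS_Q_snoc)
qed simp

lemma tableau_RS_P: "distinct w \<Longrightarrow> tableau (RS_P w)"
  and mset_concat_RS_P: "distinct w \<Longrightarrow> mset (concat (RS_P w)) = mset w"
  and shape_RS_Q: "distinct w \<Longrightarrow> map length (RS_Q w) = map length (RS_P w)"
  and set_concat_RS_Q_subset: "distinct w \<Longrightarrow> set (concat (RS_Q w)) \<subseteq> {1..length w}"
  using RS_invariant[of w] by simp_all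

lemma distinct_concat_RS_P: "distinct w \<Longrightarrow> distinct (concat (RS_P w))"
  by (metis mset_concat_RS_P mset_eq_imp_distinct_iff)

lemma set_concat_RS_P: "distinct w \<Longrightarrow> set (concat (RS_P w)) = set w"
  by (metis mset_concat_RS_P mset_eq_setD)

lemma RS_P_filter_le: "distinct w \<Longrightarrow> RS_P (filter (\<lambda>z. z \<le> k) w) = restrict_tableau k (RS_P w)"
proof (induction w rule: rev_induct)
  case Nil then show ?case by (simp add: restrict_tableau_def)
next
  case (snoc x w)
  have dw: "distinct w" using snoc.prems by simp
  have tw: "tableau (RS_P w)" using tableau_RS_P[OF dw] .
  show ?case
  proof (cases "x \<le> k")
    case True
    then have "RS_P (filter (\<lambda>z. z \<le> k) (w @ [x])) = fst (rs_insert x (RS_P (filter (\<lambda>z. z \<le> k) w)))"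
      by (simp add: RS_P_snoc)
    also have "\<dots> = restrict_tableau k (RS_P (w @ [x]))" using snoc.IH[OF dw] restrict_tableau_rs_insert_small[OF tw True] by (simp add: RS_P_snoc)
    finally show ?thesis .
  next
    case False
    then show ?thesis using snoc.IH[OF dw] restrict_tableau_rs_insert_large[of k x "RS_P w"] by (simp add: RS_P_snoc)
  qed
qed

lemma remove_add_to_row:
  assumes "j \<notin> set (concat Q)" "[] \<notin> set Q" "i \<le> length Q"
  shows "filter (\<lambda>r. r \<noteq> []) (map (filter (\<lambda>z. z \<noteq> j)) (add_to_row j i Q)) = Q"
proof -
  have Q: "map (filter (\<lambda>z. z \<noteq> j)) Q = Q" "filter (\<lambda>r. r \<noteq> []) Q = Q"
    using assms(1,2) by (induction Q) (auto intro: filter_True)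
  show ?thesis
  proof (cases "i < length Q")
    case True
    have "filter (\<lambda>z. z \<noteq> j) (Q!i @ [j]) = Q!i" using assms(1) True by (auto intro!: filter_True)
    then show ?thesis using Q True by (simp add: add_to_row_def map_update)
  qed (use Q in \<open>simp add: add_to_row_def\<close>)
qed

lemma add_to_row_inj:
  assumes "j \<notin> set (concat Q)" "j \<notin> set (concat Q')" "[] \<notin> set Q" "[] \<notin> set Q'"
    "i \<le> length Q" "i' \<le> length Q'" and eq: "add_to_row j i Q = add_to_row j i' Q'"
  shows "i = i' \<and> Q = Q'"
proof -
  have Q_eq: "Q = Q'" using remove_add_to_row[OF assms(1,3,5)] remove_add_to_row[OF assms(2,4,6)] eq by simp
  have "i = i'"
  proof (rule ccontr)
    assume ne: "i \<noteq> i'"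
    consider "i < length Q" "i' < length Q" | "i = length Q \<or> i' = length Q"
      using assms(5,6) Q_eq by (metis le_neq_implies_less)
    then show False
    proof cases
      case 1
      have "add_to_row j i Q ! i = Q!i @ [j]" "add_to_row j i' Q ! i = Q!i"
        using 1 ne by (simp_all add: add_to_row_def)
      then show ?thesis using eq Q_eq by simp
    next
      case 2
      then show ?thesis
        using eq Q_eq ne assms(5,6) by (auto simp: add_to_row_def dest: arg_cong[where f=length])
    qed
  qed
  then show ?thesis using Q_eq by simp
qed

lemma Nil_notin_RS_Q: "distinct w \<Longrightarrow> [] \<notin> set (RS_Q w)"
proof
  assume "distinct w" "[] \<in> set (RS_Q w)"
  then have "0 \<in> set (map length (RS_P w))" using shape_RS_Q by (metis image_eqI list.size(3) set_map)
  then show False using tableau_RS_P[OF \<open>distinct w\<close>] by (auto simp: tableau_def)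
qed

lemma RS_Q_snoc_inj:
  assumes "distinct w" "distinct v" "length w = length v" "RS_Q (w @ [x]) = RS_Q (v @ [y])"
  shows "RS_Q w = RS_Q v \<and> snd (rs_insert x (RS_P w)) = snd (rs_insert y (RS_P v))"
proof -
  have new: "Suc (length w) \<notin> set (concat (RS_Q w))" "Suc (length w) \<notin> set (concat (RS_Q v))"
    using set_concat_RS_Q_subset[OF assms(1)] set_concat_RS_Q_subset[OF assms(2)] assms(3) by auto
  have rows: "snd (rs_insert x (RS_P w)) \<le> length (RS_Q w)" "snd (rs_insert y (RS_P v)) \<le> length (RS_Q v)"
    using snd_rs_insert_le shape_RS_Q[OF assms(1)] shape_RS_Q[OF assms(2)] by (metis length_map)+
  show ?thesis
    using add_to_row_inj[OF new Nil_notin_RS_Q[OF assms(1)] Nil_notin_RS_Q[OF assms(2)] rows] assms(3,4)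
    by (simp add: RS_Q_snoc)
qed

lemma RS_inj:
  "distinct w \<Longrightarrow> distinct v \<Longrightarrow> length w = length v \<Longrightarrow> RS_P w = RS_P v \<Longrightarrow> RS_Q w = RS_Q v \<Longrightarrow> w = v"
proof (induction w arbitrary: v rule: rev_induct)
  case Nil then show ?case by simp
next
  case (snoc x w)
  obtain v' y where v: "v = v' @ [y]" using snoc.prems(3) by (cases v rule: rev_cases) auto
  have l: "length w = length v'" using snoc.prems(3) v by simp
  have d: "RS_Q w = RS_Q v' \<and> snd (rs_insert x (RS_P w)) = snd (rs_insert y (RS_P v'))"
    using RS_Q_snoc_inj[of w v' x y] snoc.prems v l by simp
  have e: "rs_insert x (RS_P w) = rs_insert y (RS_P v')"
    using d snoc.prems(4) v by (simp add: RS_P_snoc prod_eq_iff)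
  have tw: "tableau (RS_P w)" "tableau (RS_P v')" using tableau_RS_P snoc.prems v by simp_all
  have "x = y \<and> RS_P w = RS_P v'" using rs_insert_inj[OF _ _ e] tw by (auto simp: tableau_def)
  then show ?case using snoc.IH[of v'] snoc.prems v l d by simp
qed

lemma add_cell_corner:
  assumes P: "tableau P" "i \<le> length P" and T: "map length T = add_cell i (map length P)"
  shows "i < length T" and "Suc i < length T \<Longrightarrow> length (T!Suc i) < length (T!i)"
proof -
  have len: "length T = length (add_cell i (map length P))" using T by (metis length_map)
  then show "i < length T" using P(2) by (auto simp: add_cell_def)
  assume "Suc i < length T"
  then have "Suc i < length P" using len P(2) by (auto simp: add_cell_def split: if_splits)
  moreover have "length (T!Suc i) = map length T ! Suc i" "length (T!i) = map length T ! i"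
    using \<open>Suc i < length T\<close> by auto
  ultimately show "length (T!Suc i) < length (T!i)"
    using T tableau_shape_decreasing[OF P(1), of i] by (simp add: add_cell_def)
qed

lemma RS_surj:
  "distinct w \<Longrightarrow> tableau T \<Longrightarrow> distinct (concat T) \<Longrightarrow> map length T = map length (RS_P w) \<Longrightarrow>
   \<exists>v. RS_P v = T \<and> RS_Q v = RS_Q w \<and> length v = length w \<and> distinct v \<and> mset v = mset (concat T)"
proof (induction w arbitrary: T rule: rev_induct)
  case Nil
  then have "T = []" by simp
  then show ?case by (intro exI[of _ "[]"]) simp
next
  case (snoc x w)
  have dw: "distinct w" using snoc.prems by simp
  obtain P' i where ri: "rs_insert x (RS_P w) = (P', i)" by fastforce
  have il: "i \<le> length (RS_P w)" using snd_rs_insert_le[of x "RS_P w"] ri by simp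
  have shT: "map length T = add_cell i (map length (RS_P w))"
    using snoc.prems(4) shape_rs_insert[of x "RS_P w"] ri by (simp add: RS_P_snoc)
  have tw: "tableau (RS_P w)" using tableau_RS_P[OF dw] .
  note corner = add_cell_corner[OF tw il shT]
  obtain T' x' where u: "rs_uninsert T i = (T', x')" by fastforce
  have U: "rs_insert x' T' = (T, i)" "tableau T'" "mset (concat T) = add_mset x' (mset (concat T'))"
    using rs_uninsert_correct[OF snoc.prems(2,3) corner(1) _ u] corner(2) by auto
  have "mset (concat T) = mset (x' # concat T')" using U(3) by simp
  then have "distinct (x' # concat T')" using snoc.prems(3) mset_eq_imp_distinct_iff by blast
  then have dT': "distinct (concat T')" "x' \<notin> set (concat T')" by auto
  have il': "i \<le> length T'" using snd_rs_insert_le[of x' T'] U(1) by simp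
  have sh2: "map length T = add_cell i (map length T')" using shape_rs_insert[of x' T'] U(1) by simp
  have shT': "map length T' = map length (RS_P w)"
    using add_cell_inj[of i "map length T'" "map length (RS_P w)"] sh2 shT il il' tableau_shape_pos[OF U(2)] tableau_shape_pos[OF tw]
    by simp
  obtain v' where v': "RS_P v' = T'" "RS_Q v' = RS_Q w" "length v' = length w" "distinct v'" "mset v' = mset (concat T')"
    using snoc.IH[OF dw U(2) dT'(1) shT'] by blast
  have xv: "x' \<notin> set v'" using v'(5) dT'(2) by (metis mset_eq_setD set_mset_mset)
  show ?case
  proof (intro exI[of _ "v' @ [x']"] conjI)
    show "RS_P (v' @ [x']) = T" using v' U(1) by (simp add: RS_P_snoc)
    show "RS_Q (v' @ [x']) = RS_Q (w @ [x])" using v' U(1) ri by (simp add: RS_Q_snoc)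
    show "length (v' @ [x']) = length (w @ [x])" using v' by simp
    show "distinct (v' @ [x'])" using v' xv by simp
    show "mset (v' @ [x']) = mset (concat T)" using v' U(3) by simp
  qed
qed

section \<open>Descents are read off the recording tableau\<close>

text \<open>The row of the cell created when the \<open>k\<close>-th letter (0-based) is inserted, i.e. the row of
  \<open>k + 1\<close> in the recording tableau.\<close>

definition insertion_row :: "nat list \<Rightarrow> nat \<Rightarrow> nat" where
  "insertion_row w k = snd (rs_insert (w!k) (RS_P (take k w)))"

lemma insertion_row_eq_if_RS_Q_eq:
  "distinct w \<Longrightarrow> distinct v \<Longrightarrow> length w = length v \<Longrightarrow> RS_Q w = RS_Q v \<Longrightarrow> \<forall>k<length w. insertion_row w k = insertion_row v k"
proof (induction w arbitrary: v rule: rev_induct)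
  case Nil then show ?case by simp
next
  case (snoc x w)
  obtain v' y where v: "v = v' @ [y]" using snoc.prems(3) by (cases v rule: rev_cases) auto
  have l: "length w = length v'" using snoc.prems(3) v by simp
  have d: "RS_Q w = RS_Q v' \<and> snd (rs_insert x (RS_P w)) = snd (rs_insert y (RS_P v'))"
    using RS_Q_snoc_inj[of w v' x y] snoc.prems v l by simp
  have ih: "\<forall>k<length w. insertion_row w k = insertion_row v' k" using snoc.IH[of v'] snoc.prems v l d by simp
  show ?case
  proof (intro allI impI)
    fix k assume k: "k < length (w @ [x])"
    show "insertion_row (w @ [x]) k = insertion_row v k"
    proof (cases "k < length w")
      case True
      then have "insertion_row (w @ [x]) k = insertion_row w k" "insertion_row (v' @ [y]) k = insertion_row v' k" using l
        by (simp_all add: insertion_row_def nth_append)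
      then show ?thesis using ih True v by simp
    next
      case False
      then have kw: "k = length w" using k by simp
      have e1: "(w @ [x]) ! k = x" "take k (w @ [x]) = w" by (simp_all add: kw)
      have e2: "(v' @ [y]) ! k = y" "take k (v' @ [y]) = v'" using kw l by simp_all
      show ?thesis unfolding insertion_row_def v e1 e2 using d by simp
    qed
  qed
qed

lemma nth_notin_set_take: "distinct w \<Longrightarrow> k \<le> m \<Longrightarrow> m < length w \<Longrightarrow> w!m \<notin> set (take k w)"
proof
  assume a: "distinct w" "k \<le> m" "m < length w" "w!m \<in> set (take k w)"
  have e: "drop k w ! (m - k) = w!m" using a(2,3) by simp
  have "m - k < length (drop k w)" using a(2,3) by simp
  then have "w!m \<in> set (drop k w)" using e by (metis nth_mem)
  then show False using set_take_disj_set_drop_if_distinct[OF a(1), of k k] a(4) by auto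
qed

lemma descent_iff_insertion_row_less:
  assumes dw: "distinct w" and i: "1 \<le> i" "i < length w"
  shows "w!i < w!(i-1) \<longleftrightarrow> insertion_row w (i-1) < insertion_row w i"
proof -
  define T where "T = RS_P (take (i-1) w)"
  define x where "x = w!(i-1)"
  define y where "y = w!i"
  have i1: "i - 1 < length w" using i by simp
  have "take (Suc (i-1)) w = take (i-1) w @ [x]" using take_Suc_conv_app_nth[OF i1] by (simp add: x_def)
  then have ti: "take i w = take (i-1) w @ [x]" using i by simp
  obtain T1 r1 where r1: "rs_insert x T = (T1, r1)" by fastforce
  obtain T2 r2 where r2: "rs_insert y T1 = (T2, r2)" by fastforce
  have rw1: "insertion_row w (i-1) = r1" using r1 by (simp add: insertion_row_def T_def x_def)
  have "RS_P (take i w) = T1" using ti r1 by (simp add: RS_P_snoc T_def)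
  then have rw2: "insertion_row w i = r2" using r2 by (simp add: insertion_row_def y_def)
  have dt: "distinct (take (i-1) w)" using dw by simp
  have tT: "tableau T" using tableau_RS_P[OF dt] by (simp add: T_def)
  have dT: "distinct (concat T)" using distinct_concat_RS_P[OF dt] by (simp add: T_def)
  have sT: "set (concat T) = set (take (i-1) w)" using set_concat_RS_P[OF dt] by (simp add: T_def)
  have xT: "x \<notin> set (concat T)" using sT nth_notin_set_take[OF dw, of "i-1" "i-1"] i by (simp add: x_def)
  have yT: "y \<notin> set (concat T)" using sT nth_notin_set_take[OF dw, of "i-1" i] i by (simp add: y_def)
  have xy: "x \<noteq> y" using dw i by (simp add: x_def y_def nth_eq_iff_index_eq)
  have b: "(x < y \<longrightarrow> r2 \<le> r1) \<and> (y < x \<longrightarrow> r1 < r2)"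
    using row_bumping[OF _ dT xT yT r1 r2] tT by (auto simp: tableau_def)
  show ?thesis using b xy rw1 rw2 by (auto simp: x_def y_def)
qed

lemma des_eq_if_RS_Q_eq:
  assumes "distinct w" "distinct v" "length w = length v" "RS_Q w = RS_Q v"
  shows "des w = des v"
proof -
  have re: "\<forall>k<length w. insertion_row w k = insertion_row v k" using insertion_row_eq_if_RS_Q_eq[OF assms] .
  have "\<And>i. 1 \<le> i \<Longrightarrow> i < length w \<Longrightarrow> (w!i < w!(i-1) \<longleftrightarrow> v!i < v!(i-1))"
  proof -
    fix i assume i: "1 \<le> i" "i < length w"
    have "w!i < w!(i-1) \<longleftrightarrow> insertion_row w (i-1) < insertion_row w i" using descent_iff_insertion_row_less[OF assms(1) i] .
    also have "\<dots> \<longleftrightarrow> insertion_row v (i-1) < insertion_row v i" using re i by simp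
    also have "\<dots> \<longleftrightarrow> v!i < v!(i-1)" using descent_iff_insertion_row_less[OF assms(2)] i assms(3) by simp
    finally show "w!i < w!(i-1) \<longleftrightarrow> v!i < v!(i-1)" .
  qed
  then show ?thesis using assms(3) unfolding des_def by auto
qed

lemma tableau_vertex_eq_restrict_tableau: "tableau_vertex T k = map length (restrict_tableau k T)"
  by (induction T) (auto simp: tableau_vertex_def restrict_tableau_def)

lemma rho_filter_le: "distinct w \<Longrightarrow> rho (filter (\<lambda>z. z \<le> k) w) = tableau_vertex (RS_P w) k"
  by (simp add: rho_def RS_P_filter_le tableau_vertex_eq_restrict_tableau)

lemma filter_prefix_takeWhile:
  "(\<forall>a b. a < b \<longrightarrow> b < length L \<longrightarrow> P (L!b) \<longrightarrow> P (L!a)) \<Longrightarrow> filter P L = takeWhile P L"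
proof (induction L)
  case Nil then show ?case by simp
next
  case (Cons c L)
  show ?case
  proof (cases "P c")
    case True
    have "\<forall>a b. a < b \<longrightarrow> b < length L \<longrightarrow> P (L!b) \<longrightarrow> P (L!a)"
    proof (intro allI impI)
      fix a b assume "a < b" "b < length L" "P (L!b)"
      then show "P (L!a)" using Cons.prems[rule_format, of "Suc a" "Suc b"] by simp
    qed
    then show ?thesis using Cons.IH True by simp
  next
    case False
    have "\<forall>z\<in>set L. \<not> P z"
    proof
      fix z assume "z \<in> set L"
      then obtain b where "b < length L" "L!b = z" by (auto simp: in_set_conv_nth)
      then show "\<not> P z" using Cons.prems[rule_format, of 0 "Suc b"] False by auto
    qed
    then show ?thesis using False by (simp add: filter_empty_conv)
  qed
qed

lemma nth_default_filter_pos: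
  fixes L :: "nat list"
  assumes pre: "\<forall>a b. a < b \<longrightarrow> b < length L \<longrightarrow> 0 < L!b \<longrightarrow> 0 < L!a" and r: "r < length L"
  shows "nth_default 0 (filter (\<lambda>l. 0 < l) L) r = L!r"
proof -
  have f: "filter (\<lambda>l. 0 < l) L = takeWhile (\<lambda>l. 0 < l) L" using filter_prefix_takeWhile[OF pre] .
  show ?thesis
  proof (cases "r < length (takeWhile (\<lambda>l. 0 < l) L)")
    case True then show ?thesis using f by (simp add: nth_default_def takeWhile_nth)
  next
    case False
    define m where "m = length (takeWhile (\<lambda>l. 0 < l) L)"
    have m: "m \<le> r" "m < length L" using False r by (auto simp: m_def)
    have nm: "\<not> 0 < L!m" using nth_length_takeWhile[of "\<lambda>l. 0 < l" L] m by (simp add: m_def)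
    have "L!r = 0"
    proof (rule ccontr)
      assume "L!r \<noteq> 0"
      then have "m \<noteq> r" using nm by auto
      then have "0 < L!m" using pre[rule_format, of m r] m r \<open>L!r \<noteq> 0\<close> by simp
      then show False using nm by simp
    qed
    then show ?thesis using f False by (simp add: nth_default_def)
  qed
qed

lemma nth_default_tableau_vertex:
  assumes t: "tableau T" and r: "r < length T"
  shows "nth_default 0 (tableau_vertex T i) r = length (filter (\<lambda>z. z \<le> i) (T!r))"
proof -
  define L where "L = map (\<lambda>r. length (filter (\<lambda>x. x \<le> i) r)) T"
  have pre: "\<forall>a b. a < b \<longrightarrow> b < length L \<longrightarrow> 0 < L!b \<longrightarrow> 0 < L!a"
  proof (intro allI impI)
    fix a b assume ab: "a < b" "b < length L" "0 < L!b"
    have "0 < length (filter (\<lambda>x. x \<le> i) (T!b))" using ab by (simp add: L_def)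
    then have "filter (\<lambda>x. x \<le> i) (T!b) \<noteq> []" by auto
    then obtain z where z: "z \<in> set (T!b)" "z \<le> i" by (auto simp: filter_empty_conv)
    have "hd (T!a) < z" using tableau_hd_less_nth[OF t ab(1) _ z(1)] ab by (simp add: L_def)
    moreover have "T!a \<noteq> []" using t ab by (auto simp: tableau_def L_def)
    ultimately have "hd (T!a) \<in> set (filter (\<lambda>x. x \<le> i) (T!a))" using z by auto
    then have "filter (\<lambda>x. x \<le> i) (T!a) \<noteq> []" by (metis empty_iff list.set(1))
    then have "0 < length (filter (\<lambda>x. x \<le> i) (T!a))" by simp
    then show "0 < L!a" using ab by (simp add: L_def)
  qed
  have "tableau_vertex T i = filter (\<lambda>l. 0 < l) L" by (simp add: tableau_vertex_def L_def)
  then show ?thesis using nth_default_filter_pos[OF pre] r by (simp add: L_def)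
qed

lemma tableau_vertex_all:
  assumes "tableau T" "set (concat T) \<subseteq> {..n}"
  shows "tableau_vertex T n = map length T"
proof -
  have "map (filter (\<lambda>z. z \<le> n)) T = T"
    using assms(2) by (induction T) (auto intro!: filter_True)
  moreover have "filter (\<lambda>r. r \<noteq> []) T = T" using assms(1) by (auto simp: tableau_def intro!: filter_True)
  ultimately show ?thesis by (simp add: tableau_vertex_eq_restrict_tableau restrict_tableau_def)
qed

lemma length_filter_le_conv:
  fixes xs :: "'a::linorder list"
  shows "distinct xs \<Longrightarrow>
    length (filter (\<lambda>x. x \<le> z) xs) = length (filter (\<lambda>x. x < z) xs) + (if z \<in> set xs then 1 else 0)"
  by (induction xs) auto

lemma strict_sorted_eq_if_length_filter_le_eq:
  fixes xs ys :: "nat list"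
  assumes "sorted_wrt (<) xs" "sorted_wrt (<) ys"
    and count: "\<And>i. length (filter (\<lambda>z. z \<le> i) xs) = length (filter (\<lambda>z. z \<le> i) ys)"
  shows "xs = ys"
proof -
  have "length (filter (\<lambda>z. z < i) xs) = length (filter (\<lambda>z. z < i) ys)" for i
    using count[of "i - 1"] by (cases i) (simp_all add: less_Suc_eq_le)
  moreover have "distinct xs" "distinct ys" using assms(1,2) by (simp_all add: strict_sorted_iff)
  ultimately have "z \<in> set xs \<longleftrightarrow> z \<in> set ys" for z
    using length_filter_le_conv[of xs z] length_filter_le_conv[of ys z] count[of z] by (simp split: if_splits)
  then have "set xs = set ys" by blast
  then show ?thesis using assms sorted_distinct_set_unique by (metis strict_sorted_iff)
qed

lemma tableau_eq_if_vertices_eq: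
  assumes T1: "tableau T1" "distinct (concat T1)" "set (concat T1) = {1..n}"
    and T2: "tableau T2" "distinct (concat T2)" "set (concat T2) = {1..n}"
    and vertices: "\<forall>i\<in>{1..n}. tableau_vertex T1 i = tableau_vertex T2 i"
  shows "T1 = T2"
proof (cases "n = 0")
  case True
  then show ?thesis using tableau_empty[OF T1(1)] tableau_empty[OF T2(1)] T1(3) T2(3) by simp
next
  case False
  have "tableau_vertex T1 n = map length T1" "tableau_vertex T2 n = map length T2"
    using tableau_vertex_all T1 T2 by auto
  then have len: "length T1 = length T2" using vertices False by (metis atLeastAtMost_iff le_refl length_map less_one not_le)
  show ?thesis
  proof (rule nth_equalityI[OF len])
    fix r assume r: "r < length T1"
    have rows: "sorted_wrt (<) (T1!r)" "set (T1!r) \<subseteq> {1..n}" "sorted_wrt (<) (T2!r)" "set (T2!r) \<subseteq> {1..n}"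
      using r len T1 T2 nth_mem[of r T1] nth_mem[of r T2] by (auto simp: tableau_def)
    have "length (filter (\<lambda>z. z \<le> i) (T1!r)) = length (filter (\<lambda>z. z \<le> i) (T2!r))" for i
    proof -
      have filter_min: "filter (\<lambda>z. z \<le> i) (T!r) = filter (\<lambda>z. z \<le> min i n) (T!r)"
        if "set (T!r) \<subseteq> {1..n}" for T :: "nat list list"
        using that by (intro filter_cong) auto
      show ?thesis
      proof (cases "min i n = 0")
        case True
        have "filter (\<lambda>z. z \<le> 0) (T!r) = []" if "set (T!r) \<subseteq> {1..n}" for T :: "nat list list"
          using that by (fastforce simp: filter_empty_conv)
        then show ?thesis
          using True filter_min[OF rows(2)] filter_min[OF rows(4)] rows(2,4) by metis
      next
        case False
        then have "tableau_vertex T1 (min i n) = tableau_vertex T2 (min i n)" using vertices by simp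
        then show ?thesis
          using nth_default_tableau_vertex[OF T1(1) r, of "min i n"]
            nth_default_tableau_vertex[OF T2(1), of r "min i n"] r len
            filter_min[OF rows(2)] filter_min[OF rows(4)] by simp
      qed
    qed
    then show "T1!r = T2!r" using strict_sorted_eq_if_length_filter_le_eq rows(1,3) by blast
  qed
qed

lemma standard_tableau_imp_tableau:
  assumes p: "is_partition_of n \<tau>" and s: "standard_tableau \<tau> P"
  shows "tableau P \<and> distinct (concat P) \<and> set (concat P) = {1..n} \<and> map length P = \<tau>"
proof -
  have ml: "map length P = \<tau>" and cp: "concat P \<in> permutations_of_set {1..sum_list \<tau>}"
    and rs: "\<forall>r\<in>set P. sorted_wrt (<) r"
    and col: "\<forall>i j. Suc i < length P \<and> j < length (P ! Suc i) \<longrightarrow> P ! i ! j < P ! Suc i ! j"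
    using s by (auto simp: standard_tableau_def)
  have sn: "sum_list \<tau> = n" and pos: "\<forall>l\<in>set \<tau>. 0 < l" and dec: "sorted_wrt (\<ge>) \<tau>"
    using p by (auto simp: is_partition_of_def)
  have ne: "\<forall>r\<in>set P. r \<noteq> []" using pos ml by auto
  have d: "\<forall>i. Suc i < length P \<longrightarrow> dominates (P!i) (P!Suc i)"
  proof (intro allI impI)
    fix i assume i: "Suc i < length P"
    have "\<tau>!Suc i \<le> \<tau>!i" using dec i ml sorted_wrt_nth_less[of "(\<ge>)" \<tau> i "Suc i"] by auto
    then have "length (P!Suc i) \<le> length (P!i)" using ml i by (metis Suc_lessD nth_map)
    then show "dominates (P!i) (P!Suc i)" using col i by (auto simp: dominates_def)
  qed
  show ?thesis using ne rs d cp sn ml by (auto simp: tableau_def permutations_of_set_def)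
qed

lemma arrangement_eq_filter_le:
  assumes s: "arrangement s" and k: "1 \<le> k" "k \<le> n"
  shows "s k = filter (\<lambda>z. z \<le> k) (s n)"
  using k(2)
proof (induction k rule: inc_induct)
  case base
  have "set (s n) = {1..n}" using s k by (auto simp: arrangement_def permutations_of_set_def)
  then show ?case by (auto intro!: filter_True[symmetric])
next
  case (step m)
  have "s m = erase_max (Suc m) (s (Suc m))" using s k step(1) by (auto simp: arrangement_def)
  also have "\<dots> = filter (\<lambda>z. z \<le> m) (s n)" using step.IH by (auto simp: erase_max_def intro: filter_cong)
  finally show ?case .
qed

lemma shape_path_eq_RS_P_vertices:
  assumes "arrangement s"
  shows "map (\<lambda>i. rho (s i)) [1..<Suc n] = map (tableau_vertex (RS_P (s n))) [1..<Suc n]"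
proof (rule map_cong[OF refl])
  fix i assume "i \<in> set [1..<Suc n]"
  then have i: "1 \<le> i" "i \<le> n" by auto
  then have "distinct (s n)"
    using assms by (auto simp: arrangement_def permutations_of_set_def)
  then show "rho (s i) = tableau_vertex (RS_P (s n)) i"
    using arrangement_eq_filter_le[OF assms i] rho_filter_le by simp
qed

lemma RS_P_vertices_eq_iff:
  assumes \<alpha>: "\<alpha> \<in> permutations_of_set {1..n}"
    and T: "tableau T" "distinct (concat T)" "set (concat T) = {1..n}"
  shows "map (tableau_vertex (RS_P \<alpha>)) [1..<Suc n] = map (tableau_vertex T) [1..<Suc n] \<longleftrightarrow> RS_P \<alpha> = T"
proof
  assume "map (tableau_vertex (RS_P \<alpha>)) [1..<Suc n] = map (tableau_vertex T) [1..<Suc n]"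
  then have vertices: "\<forall>i\<in>{1..n}. tableau_vertex (RS_P \<alpha>) i = tableau_vertex T i" by auto
  have d: "distinct \<alpha>" and s: "set \<alpha> = {1..n}" using \<alpha> by (auto simp: permutations_of_set_def)
  show "RS_P \<alpha> = T"
    using tableau_eq_if_vertices_eq[OF tableau_RS_P[OF d] distinct_concat_RS_P[OF d] _ T vertices]
      set_concat_RS_P[OF d] s by simp
qed simp

section \<open>Fibres of the insertion tableau\<close>

definition RS_P_fibre :: "nat \<Rightarrow> nat list list \<Rightarrow> nat list set" where
  "RS_P_fibre n P = {\<alpha> \<in> permutations_of_set {1..n}. RS_P \<alpha> = P}"

lemma finite_RS_P_fibre: "finite (RS_P_fibre n P)"
  by (simp add: RS_P_fibre_def)

lemma RS_P_fibre_map_into: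
  assumes T: "tableau T" "distinct (concat T)" "set (concat T) = {1..n}"
    and shape: "map length P = map length T"
  shows "\<exists>\<psi>. inj_on \<psi> (RS_P_fibre n P) \<and> \<psi> ` RS_P_fibre n P \<subseteq> RS_P_fibre n T
    \<and> (\<forall>\<alpha>\<in>RS_P_fibre n P. RS_Q (\<psi> \<alpha>) = RS_Q \<alpha>)"
proof -
  have "\<exists>\<beta>. \<beta> \<in> RS_P_fibre n T \<and> RS_Q \<beta> = RS_Q \<alpha>" if \<alpha>: "\<alpha> \<in> RS_P_fibre n P" for \<alpha>
  proof -
    have d\<alpha>: "distinct \<alpha>" using \<alpha> by (auto simp: RS_P_fibre_def permutations_of_set_def)
    then obtain \<beta> where \<beta>: "RS_P \<beta> = T" "RS_Q \<beta> = RS_Q \<alpha>" "distinct \<beta>" "mset \<beta> = mset (concat T)"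
      using RS_surj[OF d\<alpha> T(1,2)] \<alpha> shape by (auto simp: RS_P_fibre_def)
    then have "set \<beta> = {1..n}" using T(3) by (metis mset_eq_setD)
    then show ?thesis using \<beta> by (auto simp: RS_P_fibre_def permutations_of_set_def)
  qed
  then obtain \<psi> where \<psi>: "\<And>\<alpha>. \<alpha> \<in> RS_P_fibre n P \<Longrightarrow> \<psi> \<alpha> \<in> RS_P_fibre n T \<and> RS_Q (\<psi> \<alpha>) = RS_Q \<alpha>"
    using bchoice[of "RS_P_fibre n P" "\<lambda>\<alpha> \<beta>. \<beta> \<in> RS_P_fibre n T \<and> RS_Q \<beta> = RS_Q \<alpha>"] by blast
  have "inj_on \<psi> (RS_P_fibre n P)"
  proof (rule inj_onI)
    fix \<alpha> \<beta> assume \<alpha>\<beta>: "\<alpha> \<in> RS_P_fibre n P" "\<beta> \<in> RS_P_fibre n P" "\<psi> \<alpha> = \<psi> \<beta>"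
    then have "RS_Q \<alpha> = RS_Q \<beta>" using \<psi>[OF \<alpha>\<beta>(1)] \<psi>[OF \<alpha>\<beta>(2)] by simp
    moreover have "RS_P \<alpha> = RS_P \<beta>" "distinct \<alpha>" "distinct \<beta>" "length \<alpha> = length \<beta>"
      using \<alpha>\<beta>(1,2) by (auto simp: RS_P_fibre_def permutations_of_set_def simp flip: distinct_card)
    ultimately show "\<alpha> = \<beta>" using RS_inj by blast
  qed
  then show ?thesis using \<psi> by (intro exI[of _ \<psi>]) auto
qed

lemma sum_RS_P_fibre_eq:
  fixes w :: "nat list \<Rightarrow> 'b::comm_monoid_add"
  assumes w: "\<And>\<alpha> \<beta>. \<alpha> \<in> permutations_of_set {1..n} \<Longrightarrow> \<beta> \<in> permutations_of_set {1..n} \<Longrightarrow>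
      RS_Q \<alpha> = RS_Q \<beta> \<Longrightarrow> w \<alpha> = w \<beta>"
    and T1: "tableau T1" "distinct (concat T1)" "set (concat T1) = {1..n}"
    and T2: "tableau T2" "distinct (concat T2)" "set (concat T2) = {1..n}"
    and shape: "map length T1 = map length T2"
  shows "(\<Sum>\<alpha>\<in>RS_P_fibre n T1. w \<alpha>) = (\<Sum>\<alpha>\<in>RS_P_fibre n T2. w \<alpha>)"
proof -
  obtain \<psi> where \<psi>: "inj_on \<psi> (RS_P_fibre n T1)" "\<psi> ` RS_P_fibre n T1 \<subseteq> RS_P_fibre n T2"
    "\<forall>\<alpha>\<in>RS_P_fibre n T1. RS_Q (\<psi> \<alpha>) = RS_Q \<alpha>"
    using RS_P_fibre_map_into[OF T2 shape] by blast
  obtain \<phi> where \<phi>: "inj_on \<phi> (RS_P_fibre n T2)" "\<phi> ` RS_P_fibre n T2 \<subseteq> RS_P_fibre n T1"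
    using RS_P_fibre_map_into[OF T1 shape[symmetric]] by blast
  have "card (RS_P_fibre n T2) \<le> card (RS_P_fibre n T1)"
    using card_inj_on_le[OF \<phi> finite_RS_P_fibre] .
  moreover have "card (RS_P_fibre n T1) \<le> card (RS_P_fibre n T2)"
    using card_inj_on_le[OF \<psi>(1,2) finite_RS_P_fibre] .
  ultimately have "card (\<psi> ` RS_P_fibre n T1) = card (RS_P_fibre n T2)"
    using card_image[OF \<psi>(1)] by simp
  then have "\<psi> ` RS_P_fibre n T1 = RS_P_fibre n T2"
    by (rule card_subset_eq[OF finite_RS_P_fibre \<psi>(2)])
  then have bij: "bij_betw \<psi> (RS_P_fibre n T1) (RS_P_fibre n T2)"
    using \<psi>(1) by (simp add: bij_betw_def)
  have "w \<alpha> = w (\<psi> \<alpha>)" if "\<alpha> \<in> RS_P_fibre n T1" for \<alpha>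
  proof (rule w)
    show "\<alpha> \<in> permutations_of_set {1..n}" "\<psi> \<alpha> \<in> permutations_of_set {1..n}"
      using that \<psi>(2) by (auto simp: RS_P_fibre_def)
  qed (use \<psi>(3) that in simp)
  then have "(\<Sum>\<alpha>\<in>RS_P_fibre n T1. w \<alpha>) = (\<Sum>\<alpha>\<in>RS_P_fibre n T1. w (\<psi> \<alpha>))"
    by (rule sum.cong[OF refl])
  also have "\<dots> = (\<Sum>\<alpha>\<in>RS_P_fibre n T2. w \<alpha>)"
    by (rule sum.reindex_bij_betw[OF bij])
  finally show ?thesis .
qed

lemma measure_vimage_finite:
  assumes "finite_measure M" "f \<in> measurable M (count_space UNIV)" "finite A"
  shows "measure M {\<omega> \<in> space M. f \<omega> \<in> A} = (\<Sum>a\<in>A. measure M {\<omega> \<in> space M. f \<omega> = a})"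
proof -
  interpret finite_measure M by fact
  have "{\<omega> \<in> space M. f \<omega> \<in> A} = (\<Union>a\<in>A. {\<omega> \<in> space M. f \<omega> = a})" by auto
  moreover have "{\<omega> \<in> space M. f \<omega> = a} \<in> sets M" for a
    using measurable_sets[OF assms(2), of "{a}"] by (simp add: vimage_def Int_def conj_commute)
  ultimately show ?thesis using assms(3)
    by (auto intro!: finite_measure_finite_Union simp: disjoint_family_on_def)
qed

lemma measure_shape_path_eq:
  assumes M: "finite_measure M" and \<sigma>n: "\<sigma> n \<in> measurable M (count_space UNIV)"
    and arr: "\<forall>\<omega>\<in>space M. arrangement (\<lambda>k. \<sigma> k \<omega>)" and n: "1 \<le> n"
    and T: "tableau T" "distinct (concat T)" "set (concat T) = {1..n}"
  shows "measure M {\<omega> \<in> space M. map (\<lambda>i. rho (\<sigma> i \<omega>)) [1..<Suc n] = map (tableau_vertex T) [1..<Suc n]}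
    = (\<Sum>\<alpha>\<in>RS_P_fibre n T. measure M {\<omega> \<in> space M. \<sigma> n \<omega> = \<alpha>})"
proof -
  have "map (\<lambda>i. rho (\<sigma> i \<omega>)) [1..<Suc n] = map (tableau_vertex T) [1..<Suc n]
      \<longleftrightarrow> \<sigma> n \<omega> \<in> RS_P_fibre n T" if "\<omega> \<in> space M" for \<omega>
  proof -
    have \<alpha>: "\<sigma> n \<omega> \<in> permutations_of_set {1..n}"
      using arr that n by (auto simp: arrangement_def)
    have "map (\<lambda>i. rho (\<sigma> i \<omega>)) [1..<Suc n] = map (tableau_vertex (RS_P (\<sigma> n \<omega>))) [1..<Suc n]"
      using shape_path_eq_RS_P_vertices arr that by blast
    then show ?thesis
      unfolding RS_P_fibre_def using RS_P_vertices_eq_iff[OF \<alpha> T] \<alpha> by (simp only: mem_Collect_eq) blast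
  qed
  then have "{\<omega> \<in> space M. map (\<lambda>i. rho (\<sigma> i \<omega>)) [1..<Suc n] = map (tableau_vertex T) [1..<Suc n]}
      = {\<omega> \<in> space M. \<sigma> n \<omega> \<in> RS_P_fibre n T}"
    by blast
  then show ?thesis using measure_vimage_finite[OF M \<sigma>n finite_RS_P_fibre] by simp
qed

lemma measure_eq_if_RS_Q_eq:
  assumes "(\<forall>k \<alpha> \<beta>. \<alpha> \<in> permutations_of_set {1..k} \<and> \<beta> \<in> permutations_of_set {1..k}
              \<and> RS_Q \<alpha> = RS_Q \<beta> \<longrightarrow> f k \<alpha> = f k \<beta>)
       \<or> (\<forall>k \<alpha> \<beta>. \<alpha> \<in> permutations_of_set {1..k} \<and> \<beta> \<in> permutations_of_set {1..k}
              \<and> des \<alpha> = des \<beta> \<longrightarrow> f k \<alpha> = f k \<beta>)"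
    and "\<alpha> \<in> permutations_of_set {1..k}" "\<beta> \<in> permutations_of_set {1..k}" "RS_Q \<alpha> = RS_Q \<beta>"
  shows "f k \<alpha> = f k \<beta>"
proof -
  have "distinct \<alpha>" "distinct \<beta>" "length \<alpha> = length \<beta>"
    using assms(2,3) by (auto simp: permutations_of_set_def simp flip: distinct_card)
  then have "des \<alpha> = des \<beta>" using des_eq_if_RS_Q_eq assms(4) by blast
  then show ?thesis using assms by blast
qed

theorem corollary29:
  fixes M :: "'a measure" and \<sigma> :: "nat \<Rightarrow> 'a \<Rightarrow> nat list"
  assumes "prob_space M"
    and "\<forall>k. \<sigma> k \<in> measurable M (count_space UNIV)"
    and "\<forall>\<omega>\<in>space M. arrangement (\<lambda>k. \<sigma> k \<omega>)"
    and "(\<forall>k \<alpha> \<beta>. \<alpha> \<in> permutations_of_set {1..k} \<and> \<beta> \<in> permutations_of_set {1..k}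
              \<and> RS_Q \<alpha> = RS_Q \<beta> \<longrightarrow>
            measure M {\<omega> \<in> space M. \<sigma> k \<omega> = \<alpha>} = measure M {\<omega> \<in> space M. \<sigma> k \<omega> = \<beta>})
       \<or> (\<forall>k \<alpha> \<beta>. \<alpha> \<in> permutations_of_set {1..k} \<and> \<beta> \<in> permutations_of_set {1..k}
              \<and> des \<alpha> = des \<beta> \<longrightarrow>
            measure M {\<omega> \<in> space M. \<sigma> k \<omega> = \<alpha>} = measure M {\<omega> \<in> space M. \<sigma> k \<omega> = \<beta>})"
  shows "\<forall>n \<tau> P1 P2. is_partition_of n \<tau> \<and> standard_tableau \<tau> P1 \<and> standard_tableau \<tau> P2 \<longrightarrow>
     measure M {\<omega> \<in> space M. map (\<lambda>i. rho (\<sigma> i \<omega>)) [1..<Suc n] = map (tableau_vertex P1) [1..<Suc n]}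
   = measure M {\<omega> \<in> space M. map (\<lambda>i. rho (\<sigma> i \<omega>)) [1..<Suc n] = map (tableau_vertex P2) [1..<Suc n]}"
proof (intro allI impI, elim conjE)
  fix n \<tau> P1 P2
  assume \<tau>: "is_partition_of n \<tau>" and P1: "standard_tableau \<tau> P1" and P2: "standard_tableau \<tau> P2"
  show "measure M {\<omega> \<in> space M. map (\<lambda>i. rho (\<sigma> i \<omega>)) [1..<Suc n] = map (tableau_vertex P1) [1..<Suc n]}
      = measure M {\<omega> \<in> space M. map (\<lambda>i. rho (\<sigma> i \<omega>)) [1..<Suc n] = map (tableau_vertex P2) [1..<Suc n]}"
  proof (cases "n = 0")
    case False
    have M: "finite_measure M" using assms(1) by (rule prob_space.finite_measure)
    have T1: "tableau P1" "distinct (concat P1)" "set (concat P1) = {1..n}" "map length P1 = \<tau>"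
      and T2: "tableau P2" "distinct (concat P2)" "set (concat P2) = {1..n}" "map length P2 = \<tau>"
      using standard_tableau_imp_tableau[OF \<tau>] P1 P2 by auto
    have "(\<Sum>\<alpha>\<in>RS_P_fibre n P1. measure M {\<omega> \<in> space M. \<sigma> n \<omega> = \<alpha>})
        = (\<Sum>\<alpha>\<in>RS_P_fibre n P2. measure M {\<omega> \<in> space M. \<sigma> n \<omega> = \<alpha>})"
      using T1(4) T2(4)
      by (intro sum_RS_P_fibre_eq[OF _ T1(1-3) T2(1-3)] measure_eq_if_RS_Q_eq[OF assms(4)]) simp_all
    then show ?thesis
      using measure_shape_path_eq[OF M _ assms(3)] assms(2) T1 T2 False by simp
  qed simp
qed

end
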